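(* Let $R$ be a ring. If there exists a finitely generated flat left $R$-module which is not projective, then the ring $Q_l(R)$ is not semi-simple.
   Context: Rings are associative with $1$. A multiplicatively closed subset $S$ ($1\in S$, $0\notin S$) is a left Ore set if $Sr\cap Rs\ne\emptyset$ for all $r\in R,s\in S$, and a left denominator set if moreover $rs=0$ ($s\in S$) implies $tr=0$ for some $t\in S$. $S_0(R)$ is the largest left denominator set of $R$ consisting of regular elements (it exists), and $Q_l(R):=S_0(R)^{-1}R$ is the largest left quotient ring of $R$. *)

theory Defs
  imports Main
begin

text \<open>A module over the ring 'a :: ring_1: carrier, addition, zero and
  scalar action.  For a left module, msmult r x is r x; for a right module,
  msmult r x is x r.\<close>

record ('a, 'm) lmod =
  mcarrier :: "'m set"
  madd :: "'m \<Rightarrow> 'm \<Rightarrow> 'm"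
  mzero :: 'm
  msmult :: "'a \<Rightarrow> 'm \<Rightarrow> 'm"

definition abelian_carrier :: "('a, 'm) lmod \<Rightarrow> bool" where
  "abelian_carrier M \<longleftrightarrow>
     mzero M \<in> mcarrier M \<and>
     (\<forall>x\<in>mcarrier M. \<forall>y\<in>mcarrier M. madd M x y \<in> mcarrier M) \<and>
     (\<forall>x\<in>mcarrier M. \<forall>y\<in>mcarrier M. \<forall>z\<in>mcarrier M.
        madd M (madd M x y) z = madd M x (madd M y z)) \<and>
     (\<forall>x\<in>mcarrier M. \<forall>y\<in>mcarrier M. madd M x y = madd M y x) \<and>
     (\<forall>x\<in>mcarrier M. madd M (mzero M) x = x) \<and>
     (\<forall>x\<in>mcarrier M. \<exists>y\<in>mcarrier M. madd M x y = mzero M)"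

definition left_module :: "('a::ring_1, 'm) lmod \<Rightarrow> bool" where
  "left_module M \<longleftrightarrow> abelian_carrier M \<and>
     (\<forall>r. \<forall>x\<in>mcarrier M. msmult M r x \<in> mcarrier M) \<and>
     (\<forall>r s. \<forall>x\<in>mcarrier M. msmult M (r * s) x = msmult M r (msmult M s x)) \<and>
     (\<forall>x\<in>mcarrier M. msmult M 1 x = x) \<and>
     (\<forall>r s. \<forall>x\<in>mcarrier M. msmult M (r + s) x = madd M (msmult M r x) (msmult M s x)) \<and>
     (\<forall>r. \<forall>x\<in>mcarrier M. \<forall>y\<in>mcarrier M.
        msmult M r (madd M x y) = madd M (msmult M r x) (msmult M r y))"

definition right_module :: "('a::ring_1, 'm) lmod \<Rightarrow> bool" where
  "right_module M \<longleftrightarrow> abelian_carrier M \<and>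
     (\<forall>r. \<forall>x\<in>mcarrier M. msmult M r x \<in> mcarrier M) \<and>
     (\<forall>r s. \<forall>x\<in>mcarrier M. msmult M (r * s) x = msmult M s (msmult M r x)) \<and>
     (\<forall>x\<in>mcarrier M. msmult M 1 x = x) \<and>
     (\<forall>r s. \<forall>x\<in>mcarrier M. msmult M (r + s) x = madd M (msmult M r x) (msmult M s x)) \<and>
     (\<forall>r. \<forall>x\<in>mcarrier M. \<forall>y\<in>mcarrier M.
        msmult M r (madd M x y) = madd M (msmult M r x) (msmult M r y))"

definition mod_hom :: "('a, 'm) lmod \<Rightarrow> ('a, 'n) lmod \<Rightarrow> ('m \<Rightarrow> 'n) set" where
  "mod_hom M N = {f. (\<forall>x\<in>mcarrier M. f x \<in> mcarrier N) \<and>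
     (\<forall>x\<in>mcarrier M. \<forall>y\<in>mcarrier M. f (madd M x y) = madd N (f x) (f y)) \<and>
     (\<forall>r. \<forall>x\<in>mcarrier M. f (msmult M r x) = msmult N r (f x))}"

inductive_set mspan :: "('a, 'm) lmod \<Rightarrow> 'm set \<Rightarrow> 'm set" for M G where
  zero: "mzero M \<in> mspan M G"
| step: "x \<in> mspan M G \<Longrightarrow> g \<in> G \<Longrightarrow> madd M x (msmult M r g) \<in> mspan M G"

definition finitely_generated :: "('a, 'm) lmod \<Rightarrow> bool" where
  "finitely_generated M \<longleftrightarrow>
     (\<exists>G. finite G \<and> G \<subseteq> mcarrier M \<and> mcarrier M = mspan M G)"

definition free_lmod :: "'i set \<Rightarrow> ('a::ring_1, 'i \<Rightarrow> 'a) lmod" where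
  "free_lmod I = \<lparr> mcarrier = {f. finite {i. f i \<noteq> 0} \<and> (\<forall>i. i \<notin> I \<longrightarrow> f i = 0)},
                   madd = (\<lambda>f g i. f i + g i),
                   mzero = (\<lambda>i. 0),
                   msmult = (\<lambda>r f i. r * f i) \<rparr>"

text \<open>Projective: direct summand of a free module (a free module on a basis indexed
  by a set of the same type as the carrier, which is enough: every projective M is
  a direct summand of the free module on the set M).\<close>

definition projective :: "('a::ring_1, 'm) lmod \<Rightarrow> bool" where
  "projective M \<longleftrightarrow> (\<exists>(I::'m set) i p.
     i \<in> mod_hom M (free_lmod I) \<and> p \<in> mod_hom (free_lmod I) M \<and>
     (\<forall>x\<in>mcarrier M. p (i x) = x))"

text \<open>N \<otimes>_R M (N a right, M a left module) is the free abelian group on N \<times> M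
  (finitely supported integer-valued functions) modulo the subgroup generated by
  the bilinearity/balancing relations.\<close>

definition delta :: "'p \<Rightarrow> 'p \<Rightarrow> int" where
  "delta p = (\<lambda>q. if q = p then 1 else 0)"

definition tensor_gens :: "('a, 'n) lmod \<Rightarrow> ('a, 'm) lmod \<Rightarrow> ('n \<times> 'm \<Rightarrow> int) set" where
  "tensor_gens N M =
     {(\<lambda>q. delta (madd N n n', m) q - delta (n, m) q - delta (n', m) q) | n n' m.
         n \<in> mcarrier N \<and> n' \<in> mcarrier N \<and> m \<in> mcarrier M}
   \<union> {(\<lambda>q. delta (n, madd M m m') q - delta (n, m) q - delta (n, m') q) | n m m'.
         n \<in> mcarrier N \<and> m \<in> mcarrier M \<and> m' \<in> mcarrier M}
   \<union> {(\<lambda>q. delta (msmult N r n, m) q - delta (n, msmult M r m) q) | n r m.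
         n \<in> mcarrier N \<and> m \<in> mcarrier M}"

inductive_set tensor_rel :: "('a, 'n) lmod \<Rightarrow> ('a, 'm) lmod \<Rightarrow> ('n \<times> 'm \<Rightarrow> int) set"
  for N M where
  zero: "(\<lambda>q. 0) \<in> tensor_rel N M"
| add: "f \<in> tensor_rel N M \<Longrightarrow> g \<in> tensor_gens N M \<Longrightarrow> (\<lambda>q. f q + g q) \<in> tensor_rel N M"
| sub: "f \<in> tensor_rel N M \<Longrightarrow> g \<in> tensor_gens N M \<Longrightarrow> (\<lambda>q. f q - g q) \<in> tensor_rel N M"

text \<open>M is flat iff for every right module N and submodule N' \<subseteq> N the induced
  map N' \<otimes> M \<rightarrow> N \<otimes> M is injective, i.e. a formal sum on N' \<times> M that is a
  relation in N \<otimes> M is already a relation in N' \<otimes> M.\<close>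

definition flat :: "('a::ring_1, 'm) lmod \<Rightarrow> bool" where
  "flat M \<longleftrightarrow> (\<forall>(N :: ('a, nat \<Rightarrow> 'a) lmod) C.
     right_module N \<and> C \<subseteq> mcarrier N \<and> right_module (N\<lparr>mcarrier := C\<rparr>) \<longrightarrow>
     (\<forall>z. finite {p. z p \<noteq> 0} \<and> {p. z p \<noteq> 0} \<subseteq> C \<times> mcarrier M \<and>
          z \<in> tensor_rel N M \<longrightarrow> z \<in> tensor_rel (N\<lparr>mcarrier := C\<rparr>) M))"

definition regular_elem :: "'a::ring_1 \<Rightarrow> bool" where
  "regular_elem s \<longleftrightarrow> (\<forall>r. r * s = 0 \<longrightarrow> r = 0) \<and> (\<forall>r. s * r = 0 \<longrightarrow> r = 0)"

definition mult_closed :: "'a::ring_1 set \<Rightarrow> bool" where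
  "mult_closed S \<longleftrightarrow> 1 \<in> S \<and> 0 \<notin> S \<and> (\<forall>s\<in>S. \<forall>t\<in>S. s * t \<in> S)"

definition left_ore_set :: "'a::ring_1 set \<Rightarrow> bool" where
  "left_ore_set S \<longleftrightarrow> mult_closed S \<and>
     (\<forall>r. \<forall>s\<in>S. \<exists>s'\<in>S. \<exists>r'. s' * r = r' * s)"

definition left_denominator_set :: "'a::ring_1 set \<Rightarrow> bool" where
  "left_denominator_set S \<longleftrightarrow> left_ore_set S \<and>
     (\<forall>r. \<forall>s\<in>S. r * s = 0 \<longrightarrow> (\<exists>t\<in>S. t * r = 0))"

definition S0 :: "'a::ring_1 set" where
  "S0 = (THE S. left_denominator_set S \<and> (\<forall>s\<in>S. regular_elem s) \<and>
          (\<forall>T. left_denominator_set T \<and> (\<forall>s\<in>T. regular_elem s) \<longrightarrow> T \<subseteq> S))"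

definition is_left_ring_of_fractions ::
  "'a::ring_1 set \<Rightarrow> ('a \<Rightarrow> 'q::ring_1) \<Rightarrow> bool" where
  "is_left_ring_of_fractions S \<sigma> \<longleftrightarrow>
     (\<forall>x y. \<sigma> (x + y) = \<sigma> x + \<sigma> y) \<and> (\<forall>x y. \<sigma> (x * y) = \<sigma> x * \<sigma> y) \<and> \<sigma> 1 = 1 \<and>
     (\<forall>s\<in>S. \<exists>u. u * \<sigma> s = 1 \<and> \<sigma> s * u = 1) \<and>
     (\<forall>q. \<exists>s\<in>S. \<exists>r. \<sigma> s * q = \<sigma> r) \<and>
     (\<forall>r. \<sigma> r = 0 \<longleftrightarrow> (\<exists>s\<in>S. s * r = 0))"

definition left_ideal :: "'q::ring_1 set \<Rightarrow> bool" where
  "left_ideal L \<longleftrightarrow> 0 \<in> L \<and> (\<forall>x\<in>L. \<forall>y\<in>L. x + y \<in> L) \<and> (\<forall>x\<in>L. - x \<in> L) \<and>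
     (\<forall>r. \<forall>x\<in>L. r * x \<in> L)"

text \<open>A ring is semisimple iff the left regular module is semisimple, i.e. every
  left ideal is a direct summand.\<close>

definition semisimple_ring :: "'q::ring_1 itself \<Rightarrow> bool" where
  "semisimple_ring TYPE('q) \<longleftrightarrow> (\<forall>L::'q set. left_ideal L \<longrightarrow>
     (\<exists>L'. left_ideal L' \<and> L \<inter> L' = {0} \<and> (\<forall>x. \<exists>a\<in>L. \<exists>b\<in>L'. x = a + b)))"

end

theory Submission
  imports Defs
begin

(*
  Let x_1, ..., x_n generate M and let K \<subseteq> R^n be the kernel of (a_j) \<mapsto> \<Sum> a_j x_j.
  If Q = Q_l(R) is semisimple, Q^n is noetherian, so \<sigma>(K) lies in the Q-span of
  \<sigma>(k_1), ..., \<sigma>(k_p) for finitely many k_i \<in> K; let k be the p \<times> n matrix with these rows.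
  The element \<Sum>_j k e_j \<otimes> x_j vanishes in R^p \<otimes> M, hence by flatness already in kR^n \<otimes> M.
  Reading this relation off in R^n \<otimes> R^n = n \<times> n matrices gives T with rows in K and
  kT = k. As \<sigma> is injective (S_0 consists of regular elements), aT = a for all a \<in> K,
  so a \<mapsto> a - aT induces a splitting of R^n \<rightarrow> M, and M is projective.
*)

section \<open>Regular elements and the denominator set S0\<close>

text \<open>The products of elements of regular left denominator sets form the largest such
  set, so S0 is well defined.\<close>

inductive_set regular_denominator_closure :: "'a::ring_1 set" where
  one: "1 \<in> regular_denominator_closure"
| mult: "s \<in> regular_denominator_closure \<Longrightarrow> left_denominator_set T \<Longrightarrow>
    \<forall>t\<in>T. regular_elem t \<Longrightarrow> u \<in> T \<Longrightarrow> u * s \<in> regular_denominator_closure"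

lemma regular_elem_mult:
  assumes "regular_elem (a::'a::ring_1)" "regular_elem b" shows "regular_elem (a * b)"
  using assms unfolding regular_elem_def by (metis mult.assoc)

lemma regular_denominator_closure_regular:
  "s \<in> regular_denominator_closure \<Longrightarrow> regular_elem s"
proof (induction rule: regular_denominator_closure.induct)
  case one
  show ?case by (simp add: regular_elem_def)
next
  case (mult s T u)
  then show ?case by (blast intro: regular_elem_mult)
qed

lemma regular_denominator_closure_mult:
  "s \<in> regular_denominator_closure \<Longrightarrow> t \<in> regular_denominator_closure \<Longrightarrow>
    s * t \<in> regular_denominator_closure"
proof (induction rule: regular_denominator_closure.induct)
  case (mult s T u)
  then show ?case by (metis regular_denominator_closure.mult mult.assoc)
qed simp

lemma subset_regular_denominator_closure:
  assumes "left_denominator_set T" "\<forall>t\<in>T. regular_elem t"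
  shows "T \<subseteq> regular_denominator_closure"
  using regular_denominator_closure.mult[OF regular_denominator_closure.one assms] by auto

lemma regular_denominator_closure_left_ore:
  "s \<in> regular_denominator_closure \<Longrightarrow> \<exists>s'\<in>regular_denominator_closure. \<exists>r'. s' * r = r' * s"
proof (induction arbitrary: r rule: regular_denominator_closure.induct)
  case one
  show ?case using regular_denominator_closure.one by force
next
  case (mult s T u)
  obtain s1 r1 where s1: "s1 \<in> regular_denominator_closure" "s1 * r = r1 * s"
    using mult.IH by blast
  obtain t r2 where t: "t \<in> T" "t * r1 = r2 * u"
    using mult.hyps(2,4) unfolding left_denominator_set_def left_ore_set_def by blast
  have "(t * s1) * r = r2 * (u * s)"
    using s1 t by (metis mult.assoc)
  moreover have "t * s1 \<in> regular_denominator_closure"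
    using s1(1) t(1) mult.hyps(2,3) by (blast intro: regular_denominator_closure.mult)
  ultimately show ?case by blast
qed

lemma left_denominator_set_regular_denominator_closure:
  "left_denominator_set (regular_denominator_closure :: 'a::ring_1 set)"
proof -
  have "(0::'a) \<notin> regular_denominator_closure"
    using regular_denominator_closure_regular unfolding regular_elem_def
    by (metis zero_neq_one mult_zero_right)
  then have "mult_closed (regular_denominator_closure :: 'a set)"
    unfolding mult_closed_def
    using regular_denominator_closure.one regular_denominator_closure_mult by blast
  then have "left_ore_set (regular_denominator_closure :: 'a set)"
    unfolding left_ore_set_def using regular_denominator_closure_left_ore by blast
  moreover have "\<exists>t\<in>regular_denominator_closure. t * r = 0"
    if "s \<in> regular_denominator_closure" "r * s = 0" for r s :: 'a
  proof -
    have "r = 0"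
      using that regular_denominator_closure_regular unfolding regular_elem_def by blast
    then show ?thesis using regular_denominator_closure.one by auto
  qed
  ultimately show ?thesis unfolding left_denominator_set_def by blast
qed

lemma S0_eq_regular_denominator_closure:
  "(S0 :: 'a::ring_1 set) = regular_denominator_closure"
  unfolding S0_def
proof (rule the_equality)
  show "left_denominator_set (regular_denominator_closure :: 'a set) \<and>
      (\<forall>s\<in>regular_denominator_closure. regular_elem s) \<and>
      (\<forall>T. left_denominator_set T \<and> (\<forall>s\<in>T. regular_elem s) \<longrightarrow> T \<subseteq> regular_denominator_closure)"
    using left_denominator_set_regular_denominator_closure regular_denominator_closure_regular
      subset_regular_denominator_closure by blast
next
  fix S :: "'a set"
  assume S: "left_denominator_set S \<and> (\<forall>s\<in>S. regular_elem s) \<and>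
      (\<forall>T. left_denominator_set T \<and> (\<forall>s\<in>T. regular_elem s) \<longrightarrow> T \<subseteq> S)"
  then have "regular_denominator_closure \<subseteq> S"
    using left_denominator_set_regular_denominator_closure regular_denominator_closure_regular
    by blast
  moreover have "S \<subseteq> regular_denominator_closure"
    using S subset_regular_denominator_closure by blast
  ultimately show "S = regular_denominator_closure" by blast
qed

lemma S0_regular: "s \<in> (S0 :: 'a::ring_1 set) \<Longrightarrow> regular_elem s"
  using S0_eq_regular_denominator_closure regular_denominator_closure_regular by blast

lemma left_ring_of_fractions_S0_inj:
  assumes "is_left_ring_of_fractions (S0 :: 'a::ring_1 set) (\<sigma> :: 'a \<Rightarrow> 'q::ring_1)"
  shows "inj \<sigma>"
proof (rule injI)
  fix x y assume eq: "\<sigma> x = \<sigma> y"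
  have add: "\<forall>x y. \<sigma> (x + y) = \<sigma> x + \<sigma> y"
    and ker: "\<forall>r. \<sigma> r = 0 \<longleftrightarrow> (\<exists>s\<in>S0. s * r = 0)"
    using assms unfolding is_left_ring_of_fractions_def by blast+
  have "\<sigma> (x - y) + \<sigma> y = \<sigma> x"
    using add[rule_format, of "x - y" y] by simp
  then have "\<sigma> (x - y) = 0" using eq by simp
  then obtain s where "s \<in> S0" "s * (x - y) = 0"
    using ker by blast
  then have "x - y = 0"
    using S0_regular unfolding regular_elem_def by blast
  then show "x = y" by simp
qed

section \<open>Semisimple rings\<close>

lemma semisimple_left_ideal_principal:
  assumes "semisimple_ring TYPE('q::ring_1)" "left_ideal (L::'q set)"
  shows "\<exists>g\<in>L. \<forall>x\<in>L. \<exists>d. x = d * g"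
proof -
  have "\<exists>L'. left_ideal L' \<and> L \<inter> L' = {0} \<and> (\<forall>x. \<exists>a\<in>L. \<exists>b\<in>L'. x = a + b)"
    using assms unfolding semisimple_ring_def by blast
  then obtain L' where L': "left_ideal L'" "L \<inter> L' = {0}" "\<forall>x. \<exists>a\<in>L. \<exists>b\<in>L'. x = a + b"
    by blast
  have "\<exists>a\<in>L. \<exists>b\<in>L'. 1 = a + b" using L'(3) by (rule spec)
  then obtain a b where ab: "a \<in> L" "b \<in> L'" "1 = a + b" by blast
  have "x = x * a" if x: "x \<in> L" for x
  proof -
    have "b = 1 - a" using ab(3) by (metis add_diff_cancel_left')
    then have xb: "x * b = x - x * a" by (simp add: right_diff_distrib)
    have "x * a \<in> L"
      using assms(2) ab(1) unfolding left_ideal_def by blast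
    then have "x - x * a \<in> L"
      using assms(2) x unfolding left_ideal_def by (metis diff_conv_add_uminus)
    moreover have "x * b \<in> L'"
      using L'(1) ab(2) unfolding left_ideal_def by blast
    ultimately have "x * b \<in> L \<inter> L'" using xb by simp
    then have "x * b = 0" using L'(2) by blast
    then show ?thesis using xb by simp
  qed
  then show ?thesis using ab(1) by blast
qed

definition left_span :: "'b set \<Rightarrow> ('b \<Rightarrow> 'q::ring_1) \<Rightarrow> 'q set" where
  "left_span K v = {x. \<exists>F c. finite F \<and> F \<subseteq> K \<and> x = (\<Sum>b\<in>F. c b * v b)}"

lemma left_spanI: "finite F \<Longrightarrow> F \<subseteq> K \<Longrightarrow> x = (\<Sum>b\<in>F. c b * v b) \<Longrightarrow> x \<in> left_span K v"
  unfolding left_span_def by auto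

lemma left_spanE:
  assumes "x \<in> left_span K v"
  obtains F c where "finite F" "F \<subseteq> K" "x = (\<Sum>b\<in>F. c b * v b)"
  using assms unfolding left_span_def by auto

lemma sum_combination_union:
  fixes v :: "'b \<Rightarrow> 'q::ring_1"
  assumes "finite F1" "finite F2"
  shows "(\<Sum>b\<in>F1. c1 b * v b) + (\<Sum>b\<in>F2. c2 b * v b) =
    (\<Sum>b\<in>F1 \<union> F2. ((if b \<in> F1 then c1 b else 0) + (if b \<in> F2 then c2 b else 0)) * v b)"
proof -
  have "(\<Sum>b\<in>F1 \<union> F2. (if b \<in> F1 then c1 b else 0) * v b) = (\<Sum>b\<in>F1. c1 b * v b)"
    by (rule sum.mono_neutral_cong_right) (use assms in auto)
  moreover have "(\<Sum>b\<in>F1 \<union> F2. (if b \<in> F2 then c2 b else 0) * v b) = (\<Sum>b\<in>F2. c2 b * v b)"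
    by (rule sum.mono_neutral_cong_right) (use assms in auto)
  ultimately show ?thesis by (simp add: distrib_right sum.distrib)
qed

lemma left_ideal_left_span: "left_ideal (left_span K v)"
  unfolding left_ideal_def
proof (intro conjI ballI allI)
  show "0 \<in> left_span K v" by (rule left_spanI[of "{}"]) auto
next
  fix x y assume x: "x \<in> left_span K v" and y: "y \<in> left_span K v"
  obtain F1 c1 where h1: "finite F1" "F1 \<subseteq> K" "x = (\<Sum>b\<in>F1. c1 b * v b)" using x by (rule left_spanE)
  obtain F2 c2 where h2: "finite F2" "F2 \<subseteq> K" "y = (\<Sum>b\<in>F2. c2 b * v b)" using y by (rule left_spanE)
  have "x + y = (\<Sum>b\<in>F1\<union>F2. ((if b\<in>F1 then c1 b else 0) + (if b\<in>F2 then c2 b else 0)) * v b)"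
    unfolding h1(3) h2(3) by (rule sum_combination_union[OF h1(1) h2(1)])
  then show "x + y \<in> left_span K v" by (rule left_spanI[rotated 2]) (use h1 h2 in auto)
next
  fix x assume x: "x \<in> left_span K v"
  obtain F c where h: "finite F" "F \<subseteq> K" "x = (\<Sum>b\<in>F. c b * v b)" using x by (rule left_spanE)
  have "- x = (\<Sum>b\<in>F. (- c b) * v b)" unfolding h(3) by (simp add: sum_negf)
  then show "- x \<in> left_span K v" by (rule left_spanI[rotated 2]) (use h in auto)
next
  fix r x assume x: "x \<in> left_span K v"
  obtain F c where h: "finite F" "F \<subseteq> K" "x = (\<Sum>b\<in>F. c b * v b)" using x by (rule left_spanE)
  have "r * x = (\<Sum>b\<in>F. (r * c b) * v b)" unfolding h(3) by (simp add: sum_distrib_left mult.assoc)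
  then show "r * x \<in> left_span K v" by (rule left_spanI[rotated 2]) (use h in auto)
qed

lemma semisimple_family_principal:
  fixes x :: "'b \<Rightarrow> 'q::ring_1"
  assumes "semisimple_ring TYPE('q)"
  obtains F d c where "finite F" "F \<subseteq> K" "\<And>a. a \<in> K \<Longrightarrow> x a = d a * (\<Sum>b\<in>F. c b * x b)"
proof -
  obtain g where g: "g \<in> left_span K x" "\<forall>y\<in>left_span K x. \<exists>d. y = d * g"
    using semisimple_left_ideal_principal[OF assms left_ideal_left_span] by blast
  obtain F c where F: "finite F" "F \<subseteq> K" "g = (\<Sum>b\<in>F. c b * x b)"
    using g(1) by (rule left_spanE)
  have "x a \<in> left_span K x" if "a \<in> K" for a
    by (rule left_spanI[of "{a}" _ _ "\<lambda>_. 1"]) (use that in auto)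
  then have "\<exists>d. x a = d * g" if "a \<in> K" for a
    using g(2) that by blast
  then obtain d where "\<And>a. a \<in> K \<Longrightarrow> x a = d a * g"
    by metis
  then show thesis using that F by blast
qed

lemma combination_shift:
  fixes \<phi> :: "'b \<Rightarrow> 'q::ring_1"
  assumes "\<phi> a - d a * g = (\<Sum>b\<in>F. e b * (\<phi> b - d b * g))"
  shows "\<phi> a = (\<Sum>b\<in>F. e b * \<phi> b) + (d a - (\<Sum>b\<in>F. e b * d b)) * g"
proof -
  have "\<phi> a = (\<phi> a - d a * g) + d a * g" by simp
  also have "\<dots> = (\<Sum>b\<in>F. e b * \<phi> b) - (\<Sum>b\<in>F. e b * d b) * g + d a * g"
    unfolding assms by (simp add: right_diff_distrib sum_subtractf sum_distrib_right mult.assoc)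
  also have "\<dots> = (\<Sum>b\<in>F. e b * \<phi> b) + (d a - (\<Sum>b\<in>F. e b * d b)) * g"
    by (simp add: algebra_simps)
  finally show ?thesis .
qed

lemma semisimple_finite_left_span:
  fixes \<phi> :: "'b \<Rightarrow> nat \<Rightarrow> 'q::ring_1"
  assumes ss: "semisimple_ring TYPE('q)"
  shows "\<exists>F. finite F \<and> F \<subseteq> K \<and> (\<forall>a\<in>K. \<exists>c. \<forall>j<n. \<phi> a j = (\<Sum>b\<in>F. c b * \<phi> b j))"
proof (induction n arbitrary: \<phi>)
  case 0
  show ?case by (rule exI[of _ "{}"]) simp
next
  case (Suc n)
  obtain F1 d c1 where F1: "finite F1" "F1 \<subseteq> K"
    and col: "\<And>a. a \<in> K \<Longrightarrow> \<phi> a n = d a * (\<Sum>b\<in>F1. c1 b * \<phi> b n)"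
    using semisimple_family_principal[OF ss, of K "\<lambda>b. \<phi> b n"] by blast
  define G where "G j = (\<Sum>b\<in>F1. c1 b * \<phi> b j)" for j
  define \<psi> where "\<psi> a j = \<phi> a j - d a * G j" for a j
  have \<psi>_col: "\<psi> a n = 0" if "a \<in> K" for a
    using col[OF that] unfolding \<psi>_def G_def by simp
  obtain F2 where F2: "finite F2" "F2 \<subseteq> K"
    and comb: "\<forall>a\<in>K. \<exists>e. \<forall>j<n. \<psi> a j = (\<Sum>b\<in>F2. e b * \<psi> b j)"
    using Suc.IH[of \<psi>] by blast
  have "\<exists>c. \<forall>j<Suc n. \<phi> a j = (\<Sum>b\<in>F2 \<union> F1. c b * \<phi> b j)" if a: "a \<in> K" for a
  proof -
    obtain e where e: "\<forall>j<n. \<psi> a j = (\<Sum>b\<in>F2. e b * \<psi> b j)"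
      using comb a by blast
    have e': "\<psi> a j = (\<Sum>b\<in>F2. e b * \<psi> b j)" if "j < Suc n" for j
    proof (cases "j < n")
      case False
      then have "j = n" using that by simp
      then show ?thesis using \<psi>_col a F2(2) by (simp add: subset_iff)
    qed (use e in blast)
    define D where "D = d a - (\<Sum>b\<in>F2. e b * d b)"
    have split: "\<phi> a j = (\<Sum>b\<in>F2. e b * \<phi> b j) + (\<Sum>b\<in>F1. (D * c1 b) * \<phi> b j)"
      if "j < Suc n" for j
      using combination_shift[OF e'[OF that, unfolded \<psi>_def]]
      unfolding D_def G_def by (simp add: sum_distrib_left mult.assoc)
    show ?thesis
    proof (intro exI allI impI)
      fix j assume "j < Suc n"
      then show "\<phi> a j = (\<Sum>b\<in>F2 \<union> F1.
          ((if b \<in> F2 then e b else 0) + (if b \<in> F1 then D * c1 b else 0)) * \<phi> b j)"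
        using split sum_combination_union[OF F2(1) F1(1)] by simp
    qed
  qed
  moreover have "finite (F2 \<union> F1)" "F2 \<union> F1 \<subseteq> K" using F1 F2 by auto
  ultimately show ?case by blast
qed

lemma semisimple_finite_left_span_enum:
  fixes \<phi> :: "'b \<Rightarrow> nat \<Rightarrow> 'q::ring_1"
  assumes "semisimple_ring TYPE('q)"
  obtains p and ks :: "nat \<Rightarrow> 'b" where "\<And>i. i < p \<Longrightarrow> ks i \<in> K"
    "\<And>a. a \<in> K \<Longrightarrow> \<exists>c. \<forall>j<n. \<phi> a j = (\<Sum>i<p. c i * \<phi> (ks i) j)"
proof -
  obtain F where F: "finite F" "F \<subseteq> K"
    and comb: "\<forall>a\<in>K. \<exists>c. \<forall>j<n. \<phi> a j = (\<Sum>b\<in>F. c b * \<phi> b j)"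
    using semisimple_finite_left_span[OF assms, where K = K and n = n and \<phi> = \<phi>] by blast
  have "\<exists>(p::nat) ks. F = ks ` {i. i < p} \<and> inj_on ks {i. i < p}"
    by (rule finite_imp_nat_seg_image_inj_on[OF F(1)])
  then obtain p :: nat and ks where ks: "F = ks ` {..<p}" "inj_on ks {..<p}"
    by (auto simp: lessThan_def)
  have "ks i \<in> K" if "i < p" for i using that F(2) ks(1) by auto
  moreover have "\<exists>c. \<forall>j<n. \<phi> a j = (\<Sum>i<p. c i * \<phi> (ks i) j)" if a: "a \<in> K" for a
  proof -
    obtain c where "\<forall>j<n. \<phi> a j = (\<Sum>b\<in>F. c b * \<phi> b j)"
      using bspec[OF comb a] by (rule exE)
    then have "\<forall>j<n. \<phi> a j = (\<Sum>i<p. c (ks i) * \<phi> (ks i) j)"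
      unfolding ks(1) sum.reindex[OF ks(2)] by simp
    then show ?thesis by (rule exI[of _ "\<lambda>i. c (ks i)"])
  qed
  ultimately show thesis by (rule that)
qed

lemma additive_sum:
  fixes \<sigma> :: "'a::ring_1 \<Rightarrow> 'q::ring_1"
  assumes "\<And>x y. \<sigma> (x + y) = \<sigma> x + \<sigma> y"
  shows "\<sigma> (sum f A) = (\<Sum>x\<in>A. \<sigma> (f x))"
proof -
  have "\<sigma> 0 = 0" using assms[of 0 0] by simp
  then show ?thesis using sum_comp_morphism[of \<sigma> f A] assms by simp
qed

lemma fixed_if_left_combination_of_fixed:
  fixes \<sigma> :: "'a::ring_1 \<Rightarrow> 'q::ring_1"
  assumes add: "\<And>x y. \<sigma> (x + y) = \<sigma> x + \<sigma> y"
    and mult: "\<And>x y. \<sigma> (x * y) = \<sigma> x * \<sigma> y"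
    and "inj \<sigma>"
    and comb: "\<And>j. j < n \<Longrightarrow> \<sigma> (a j) = (\<Sum>i<p. c i * \<sigma> (ks i j))"
    and fixed: "\<And>i. i < p \<Longrightarrow> (\<Sum>j<n. ks i j * T j j') = ks i j'"
    and "j' < n"
  shows "(\<Sum>j<n. a j * T j j') = a j'"
proof -
  have "\<sigma> (\<Sum>j<n. a j * T j j') = (\<Sum>j<n. (\<Sum>i<p. c i * \<sigma> (ks i j)) * \<sigma> (T j j'))"
    by (simp add: additive_sum[OF add] mult comb)
  also have "\<dots> = (\<Sum>j<n. \<Sum>i<p. c i * (\<sigma> (ks i j) * \<sigma> (T j j')))"
    by (simp add: sum_distrib_right mult.assoc)
  also have "\<dots> = (\<Sum>i<p. \<Sum>j<n. c i * (\<sigma> (ks i j) * \<sigma> (T j j')))"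
    by (rule sum.swap)
  also have "\<dots> = (\<Sum>i<p. c i * \<sigma> (\<Sum>j<n. ks i j * T j j'))"
    by (simp add: sum_distrib_left additive_sum[OF add] mult)
  also have "\<dots> = (\<Sum>i<p. c i * \<sigma> (ks i j'))"
    by (simp add: fixed)
  also have "\<dots> = \<sigma> (a j')" using comb[OF \<open>j' < n\<close>] by simp
  finally show ?thesis by (rule injD[OF \<open>inj \<sigma>\<close>])
qed

section \<open>Modules and splittings\<close>

fun msum :: "('a, 'm) lmod \<Rightarrow> (nat \<Rightarrow> 'm) \<Rightarrow> nat \<Rightarrow> 'm" where
  "msum M f 0 = mzero M"
| "msum M f (Suc n) = madd M (msum M f n) (f n)"

lemma msum_cong: "(\<And>i. i < n \<Longrightarrow> f i = g i) \<Longrightarrow> msum M f n = msum M g n"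
  by (induction n) auto

locale lmodule =
  fixes M :: "('a::ring_1, 'm) lmod"
  assumes lmod: "left_module M"
begin

lemma abelian: "abelian_carrier M" using lmod unfolding left_module_def by blast

lemma zero_closed[simp]: "mzero M \<in> mcarrier M" using abelian unfolding abelian_carrier_def by blast

lemma add_closed[simp]: "x \<in> mcarrier M \<Longrightarrow> y \<in> mcarrier M \<Longrightarrow> madd M x y \<in> mcarrier M"
  using abelian unfolding abelian_carrier_def by blast

lemma add_assoc: "x \<in> mcarrier M \<Longrightarrow> y \<in> mcarrier M \<Longrightarrow> z \<in> mcarrier M \<Longrightarrow>
  madd M (madd M x y) z = madd M x (madd M y z)"
  using abelian unfolding abelian_carrier_def by blast

lemma add_comm: "x \<in> mcarrier M \<Longrightarrow> y \<in> mcarrier M \<Longrightarrow> madd M x y = madd M y x"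
  using abelian unfolding abelian_carrier_def by blast

lemma add_zero_left[simp]: "x \<in> mcarrier M \<Longrightarrow> madd M (mzero M) x = x"
  using abelian unfolding abelian_carrier_def by blast

lemma add_zero_right[simp]: "x \<in> mcarrier M \<Longrightarrow> madd M x (mzero M) = x"
  using add_zero_left add_comm zero_closed by metis

lemma add_inverse_ex: "x \<in> mcarrier M \<Longrightarrow> \<exists>y\<in>mcarrier M. madd M x y = mzero M"
  using abelian unfolding abelian_carrier_def by blast

lemma smult_closed[simp]: "x \<in> mcarrier M \<Longrightarrow> msmult M r x \<in> mcarrier M"
  using lmod unfolding left_module_def by blast

lemma smult_assoc: "x \<in> mcarrier M \<Longrightarrow> msmult M (r * s) x = msmult M r (msmult M s x)"
  using lmod unfolding left_module_def by blast

lemma smult_one[simp]: "x \<in> mcarrier M \<Longrightarrow> msmult M 1 x = x"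
  using lmod unfolding left_module_def by blast

lemma smult_add_left: "x \<in> mcarrier M \<Longrightarrow> msmult M (r + s) x = madd M (msmult M r x) (msmult M s x)"
  using lmod unfolding left_module_def by blast

lemma smult_add_right: "x \<in> mcarrier M \<Longrightarrow> y \<in> mcarrier M \<Longrightarrow>
   msmult M r (madd M x y) = madd M (msmult M r x) (msmult M r y)"
  using lmod unfolding left_module_def by blast

lemma add_cancel_left:
  assumes "x \<in> mcarrier M" "y \<in> mcarrier M" "z \<in> mcarrier M" "madd M x y = madd M x z"
  shows "y = z"
proof -
  obtain x' where x': "x' \<in> mcarrier M" "madd M x x' = mzero M"
    using add_inverse_ex assms(1) by blast
  have x'': "madd M x' x = mzero M" using x' add_comm assms(1) by simp
  have "y = madd M (madd M x' x) y" using x'' assms by simp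
  also have "\<dots> = madd M x' (madd M x y)" using add_assoc x' assms by simp
  also have "\<dots> = madd M x' (madd M x z)" using assms by simp
  also have "\<dots> = madd M (madd M x' x) z" using add_assoc x' assms by simp
  also have "\<dots> = z" using x'' assms by simp
  finally show ?thesis .
qed

lemma add_cancel_zero:
  assumes "x \<in> mcarrier M" "y \<in> mcarrier M" "madd M x y = x"
  shows "y = mzero M"
  using add_cancel_left[OF assms(1,2) zero_closed] assms by simp

lemma smult_zero[simp]: "msmult M r (mzero M) = mzero M"
proof -
  have "madd M (msmult M r (mzero M)) (msmult M r (mzero M)) = msmult M r (mzero M)"
    using smult_add_right[of "mzero M" "mzero M" r] by simp
  then show ?thesis using add_cancel_zero[of "msmult M r (mzero M)" "msmult M r (mzero M)"] by simp
qed

lemma zero_smult[simp]: "x \<in> mcarrier M \<Longrightarrow> msmult M 0 x = mzero M"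
proof -
  assume x: "x \<in> mcarrier M"
  have "madd M (msmult M 0 x) (msmult M 0 x) = msmult M 0 x"
    using smult_add_left[OF x, of 0 0] by simp
  then show ?thesis using add_cancel_zero[of "msmult M 0 x" "msmult M 0 x"] x by simp
qed

lemma add_add_swap:
  assumes "a \<in> mcarrier M" "b \<in> mcarrier M" "c \<in> mcarrier M" "d \<in> mcarrier M"
  shows "madd M (madd M a b) (madd M c d) = madd M (madd M a c) (madd M b d)"
proof -
  have "madd M (madd M a b) (madd M c d) = madd M a (madd M b (madd M c d))" using add_assoc assms
    by simp
  also have "madd M b (madd M c d) = madd M (madd M b c) d" using add_assoc assms by simp
  also have "madd M b c = madd M c b" using add_comm assms by simp
  also have "madd M (madd M c b) d = madd M c (madd M b d)" using add_assoc assms by simp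
  also have "madd M a (madd M c (madd M b d)) = madd M (madd M a c) (madd M b d)"
    using add_assoc assms by simp
  finally show ?thesis .
qed

lemma msum_closed[simp]: "(\<And>i. i < n \<Longrightarrow> f i \<in> mcarrier M) \<Longrightarrow> msum M f n \<in> mcarrier M"
  by (induction n) auto

lemma msum_add:
  assumes "\<And>i. i < n \<Longrightarrow> f i \<in> mcarrier M" "\<And>i. i < n \<Longrightarrow> g i \<in> mcarrier M"
  shows "msum M (\<lambda>i. madd M (f i) (g i)) n = madd M (msum M f n) (msum M g n)"
  using assms
proof (induction n)
  case 0 then show ?case by simp
next
  case (Suc n)
  then show ?case by (simp add: add_add_swap)
qed

lemma msum_smult:
  assumes "\<And>i. i < n \<Longrightarrow> f i \<in> mcarrier M"
  shows "msum M (\<lambda>i. msmult M r (f i)) n = msmult M r (msum M f n)"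
  using assms by (induction n) (auto simp: smult_add_right)

lemma msum_zero: "msum M (\<lambda>i. mzero M) n = mzero M"
  by (induction n) auto

lemma msum_single:
  assumes "y \<in> mcarrier M"
  shows "msum M (\<lambda>i. if i = k then y else mzero M) n = (if k < n then y else mzero M)"
  using assms by (induction n) auto

end

definition unit_vec :: "nat \<Rightarrow> nat \<Rightarrow> 'a::zero_neq_one" where
  "unit_vec i = (\<lambda>j. if j = i then 1 else 0)"

lemma free_lmod_simps:
  "mcarrier (free_lmod I) = {f. finite {i. f i \<noteq> 0} \<and> (\<forall>i. i \<notin> I \<longrightarrow> f i = 0)}"
  "madd (free_lmod I) = (\<lambda>f g i. f i + g i)" "msmult (free_lmod I) = (\<lambda>r f i. r * f i)"
  unfolding free_lmod_def by simp_all

locale finite_family = lmodule M for M :: "('a::ring_1, 'm) lmod" +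
  fixes xs :: "nat \<Rightarrow> 'm" and n :: nat
  assumes gen_closed: "\<And>j. j < n \<Longrightarrow> xs j \<in> mcarrier M"
begin

definition lin :: "(nat \<Rightarrow> 'a) \<Rightarrow> 'm" where
  "lin a = msum M (\<lambda>j. msmult M (a j) (xs j)) n"

lemma lin_in[simp]: "lin a \<in> mcarrier M"
  unfolding lin_def by (rule msum_closed) (simp add: gen_closed)

lemma lin_cong: "(\<And>j. j < n \<Longrightarrow> a j = b j) \<Longrightarrow> lin a = lin b"
  unfolding lin_def by (rule msum_cong) simp

lemma lin_add: "lin (\<lambda>j. a j + b j) = madd M (lin a) (lin b)"
proof -
  have "lin (\<lambda>j. a j + b j) = msum M (\<lambda>j. madd M (msmult M (a j) (xs j)) (msmult M (b j) (xs j))) n"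
    unfolding lin_def by (rule msum_cong) (simp add: smult_add_left gen_closed)
  also have "\<dots> = madd M (lin a) (lin b)" unfolding lin_def
    by (rule msum_add) (simp_all add: gen_closed)
  finally show ?thesis .
qed

lemma lin_smult: "lin (\<lambda>j. r * a j) = msmult M r (lin a)"
proof -
  have "lin (\<lambda>j. r * a j) = msum M (\<lambda>j. msmult M r (msmult M (a j) (xs j))) n"
    unfolding lin_def by (rule msum_cong) (simp add: smult_assoc gen_closed)
  also have "\<dots> = msmult M r (lin a)" unfolding lin_def by (rule msum_smult) (simp add: gen_closed)
  finally show ?thesis .
qed

lemma lin_zero: "lin (\<lambda>j. 0) = mzero M"
proof -
  have "lin (\<lambda>j. 0) = msum M (\<lambda>j. mzero M) n"
    unfolding lin_def by (rule msum_cong) (simp add: gen_closed)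
  then show ?thesis using msum_zero by simp
qed

lemma lin_diff_eq_zero:
  assumes "lin a = lin b" shows "lin (\<lambda>j. a j - b j) = mzero M"
proof -
  have "madd M (lin b) (lin (\<lambda>j. a j - b j)) = lin (\<lambda>j. (a j - b j) + b j)"
    using lin_add[of "\<lambda>j. a j - b j" b] add_comm by simp
  also have "\<dots> = lin b" using assms by simp
  finally show ?thesis using add_cancel_zero[of "lin b" "lin (\<lambda>j. a j - b j)"] by simp
qed

lemma lin_diff_kernel:
  assumes "lin b = mzero M" shows "lin (\<lambda>j. a j - b j) = lin a"
proof -
  have "lin a = lin (\<lambda>j. (a j - b j) + b j)" by simp
  also have "\<dots> = lin (\<lambda>j. a j - b j)" using lin_add[of "\<lambda>j. a j - b j" b] assms by simp
  finally show ?thesis by simp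
qed

lemma lin_unit_vec: "k < n \<Longrightarrow> lin (unit_vec k) = xs k"
proof -
  assume k: "k < n"
  have "lin (unit_vec k) = msum M (\<lambda>j. if j = k then xs k else mzero M) n"
    unfolding lin_def unit_vec_def by (rule msum_cong) (simp add: gen_closed)
  also have "\<dots> = xs k" using msum_single[OF gen_closed[OF k]] k by simp
  finally show ?thesis .
qed

lemma lin_sum_kernel:
  fixes p :: nat and v :: "nat \<Rightarrow> nat \<Rightarrow> 'a"
  assumes "\<And>i. i < p \<Longrightarrow> lin (v i) = mzero M"
  shows "lin (\<lambda>j. \<Sum>i<p. c i * v i j) = mzero M"
  using assms
proof (induction p)
  case 0 then show ?case using lin_zero by simp
next
  case (Suc p)
  have "lin (\<lambda>j. \<Sum>i<Suc p. c i * v i j) = lin (\<lambda>j. (\<Sum>i<p. c i * v i j) + c p * v p j)" by simp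
  also have "\<dots> = madd M (lin (\<lambda>j. \<Sum>i<p. c i * v i j)) (lin (\<lambda>j. c p * v p j))" by (rule lin_add)
  also have "\<dots> = mzero M" using Suc lin_smult[of "c p" "v p"] by simp
  finally show ?case .
qed

lemma lin_hom_free_lmod: "(\<lambda>f. lin (\<lambda>j. f (xs j))) \<in> mod_hom (free_lmod I) M"
  unfolding mod_hom_def free_lmod_simps by (auto simp: lin_add lin_smult)

end

locale generating_family = finite_family M xs n for M :: "('a::ring_1, 'm) lmod" and xs n +
  assumes gen_inj: "inj_on xs {..<n}"
    and lin_surj: "\<And>m. m \<in> mcarrier M \<Longrightarrow> \<exists>a. lin a = m"
begin

definition gen_index :: "'m \<Rightarrow> nat" where
  "gen_index m = (THE j. j < n \<and> xs j = m)"

text \<open>On the generators the coordinates are chosen to be unit vectors, which makes the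
  image of a basic tensor computable.\<close>

definition coords :: "'m \<Rightarrow> nat \<Rightarrow> 'a" where
  "coords m = (if m \<in> xs ` {..<n} then unit_vec (gen_index m) else (SOME a. lin a = m))"

lemma gen_index_xs: "j < n \<Longrightarrow> gen_index (xs j) = j"
  unfolding gen_index_def
proof (rule the_equality)
  assume "j < n" then show "j < n \<and> xs j = xs j" by simp
next
  fix j' assume "j < n" "j' < n \<and> xs j' = xs j"
  then show "j' = j" using gen_inj unfolding inj_on_def by auto
qed

lemma coords_gen: "j < n \<Longrightarrow> coords (xs j) = unit_vec j"
  unfolding coords_def using gen_index_xs by auto

lemma lin_coords: "m \<in> mcarrier M \<Longrightarrow> lin (coords m) = m"
proof (cases "m \<in> xs ` {..<n}")
  case True
  then obtain j where "j < n" "m = xs j" by auto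
  then show ?thesis using coords_gen lin_unit_vec by simp
next
  case False
  assume "m \<in> mcarrier M"
  then have "\<exists>a. lin a = m" by (rule lin_surj)
  then have "lin (SOME a. lin a = m) = m" by (rule someI_ex)
  then show ?thesis unfolding coords_def using False by simp
qed

end

lemma (in lmodule) obtain_generating_family:
  assumes "finitely_generated M"
  obtains xs n where "generating_family M xs n"
proof -
  obtain G where G: "finite G" "G \<subseteq> mcarrier M" "mcarrier M = mspan M G"
    using assms unfolding finitely_generated_def by blast
  have "\<exists>(n::nat) xs. G = xs ` {i. i < n} \<and> inj_on xs {i. i < n}"
    by (rule finite_imp_nat_seg_image_inj_on[OF G(1)])
  then obtain n :: nat and xs where xs: "G = xs ` {..<n}" "inj_on xs {..<n}"
    by (auto simp: lessThan_def)
  interpret finite_family M xs n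
    by unfold_locales (use G(2) xs(1) in auto)
  have "\<exists>a. lin a = m" if "m \<in> mspan M G" for m
    using that
  proof (induction rule: mspan.induct)
    case zero
    show ?case using lin_zero by blast
  next
    case (step x g r)
    then obtain a where a: "lin a = x" by blast
    obtain k where k: "k < n" "g = xs k" using step.hyps(2) xs(1) by auto
    have "lin (\<lambda>j. a j + r * unit_vec k j) = madd M x (msmult M r g)"
      using a k lin_add lin_smult lin_unit_vec by simp
    then show ?case by blast
  qed
  then have "generating_family M xs n"
    by unfold_locales (use G(3) xs(2) in auto)
  then show thesis by (rule that)
qed

locale kernel_retraction = generating_family M xs n for M :: "('a::ring_1, 'm) lmod" and xs n +
  fixes T :: "nat \<Rightarrow> nat \<Rightarrow> 'a"
  assumes rows_in_kernel: "\<And>j. j < n \<Longrightarrow> lin (T j) = mzero M"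
    and kernel_fixed: "\<And>a j'. lin a = mzero M \<Longrightarrow> j' < n \<Longrightarrow> (\<Sum>j<n. a j * T j j') = a j'"
begin

text \<open>The map a \<mapsto> a - aT kills the kernel of lin, so it factors through M and
  yields a section of lin.\<close>

definition retract :: "(nat \<Rightarrow> 'a) \<Rightarrow> nat \<Rightarrow> 'a" where
  "retract a j' = a j' - (\<Sum>j<n. a j * T j j')"

lemma retract_eq_if_lin_eq:
  assumes "lin a = lin b" "j' < n"
  shows "retract a j' = retract b j'"
proof -
  have "lin (\<lambda>j. a j - b j) = mzero M" using assms(1) by (rule lin_diff_eq_zero)
  then have "(\<Sum>j<n. (a j - b j) * T j j') = a j' - b j'" using kernel_fixed assms(2) by blast
  then show ?thesis unfolding retract_def
    by (simp add: left_diff_distrib sum_subtractf algebra_simps)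
qed

lemma retract_add: "retract (\<lambda>j. a j + b j) j' = retract a j' + retract b j'"
  unfolding retract_def by (simp add: distrib_right sum.distrib algebra_simps)

lemma retract_smult: "retract (\<lambda>j. r * a j) j' = r * retract a j'"
  unfolding retract_def by (simp add: sum_distrib_left mult.assoc right_diff_distrib)

lemma lin_retract: "lin (retract a) = lin a"
  unfolding retract_def[abs_def]
    by (rule lin_diff_kernel) (rule lin_sum_kernel, rule rows_in_kernel)

definition splitting :: "'m \<Rightarrow> 'm \<Rightarrow> 'a" where
  "splitting m g = (if g \<in> xs ` {..<n} then retract (coords m) (gen_index g) else 0)"

lemma splitting_add:
  assumes "x \<in> mcarrier M" "y \<in> mcarrier M"
  shows "splitting (madd M x y) g = splitting x g + splitting y g"
proof (cases "g \<in> xs ` {..<n}")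
  case True
  then obtain j where j: "j < n" "g = xs j" by auto
  have L: "lin (coords (madd M x y)) = lin (\<lambda>j. coords x j + coords y j)"
    using assms lin_coords lin_add by simp
  show ?thesis
    unfolding splitting_def using retract_eq_if_lin_eq[OF L j(1)] retract_add j
    by (simp add: gen_index_xs)
qed (simp add: splitting_def)

lemma splitting_smult:
  assumes "x \<in> mcarrier M"
  shows "splitting (msmult M r x) g = r * splitting x g"
proof (cases "g \<in> xs ` {..<n}")
  case True
  then obtain j where j: "j < n" "g = xs j" by auto
  have L: "lin (coords (msmult M r x)) = lin (\<lambda>j. r * coords x j)"
    using assms lin_coords lin_smult by simp
  show ?thesis
    unfolding splitting_def using retract_eq_if_lin_eq[OF L j(1)] retract_smult j
    by (simp add: gen_index_xs)
qed (simp add: splitting_def)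

lemma splitting_hom: "splitting \<in> mod_hom M (free_lmod (xs ` {..<n}))"
  unfolding mod_hom_def
proof (intro CollectI conjI ballI allI)
  fix x
  have "finite {g. splitting x g \<noteq> 0}"
    by (rule finite_subset[of _ "xs ` {..<n}"]) (auto simp: splitting_def)
  then show "splitting x \<in> mcarrier (free_lmod (xs ` {..<n}))"
    unfolding free_lmod_simps by (simp add: splitting_def)
next
  fix x y assume "x \<in> mcarrier M" "y \<in> mcarrier M"
  then show "splitting (madd M x y) = madd (free_lmod (xs ` {..<n})) (splitting x) (splitting y)"
    unfolding free_lmod_simps by (intro ext splitting_add)
next
  fix r x assume "x \<in> mcarrier M"
  then show "splitting (msmult M r x) = msmult (free_lmod (xs ` {..<n})) r (splitting x)"
    unfolding free_lmod_simps by (intro ext splitting_smult)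
qed

lemma lin_splitting: "x \<in> mcarrier M \<Longrightarrow> lin (\<lambda>j. splitting x (xs j)) = x"
proof -
  assume "x \<in> mcarrier M"
  have "lin (\<lambda>j. splitting x (xs j)) = lin (retract (coords x))"
    by (rule lin_cong) (auto simp: splitting_def gen_index_xs)
  also have "\<dots> = x" using lin_retract lin_coords \<open>x \<in> mcarrier M\<close> by simp
  finally show ?thesis .
qed

lemma projective: "projective M"
  unfolding projective_def
  by (intro exI[of _ "xs ` {..<n}"] exI[of _ splitting] exI[of _ "\<lambda>f. lin (\<lambda>j. f (xs j))"]
      conjI ballI splitting_hom lin_hom_free_lmod lin_splitting)

end

section \<open>Relations in tensor products\<close>

lemma tensor_rel_gen: "g \<in> tensor_gens N M \<Longrightarrow> g \<in> tensor_rel N M"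
  using tensor_rel.add[OF tensor_rel.zero, of g] by simp

lemma tensor_rel_add: "g \<in> tensor_rel N M \<Longrightarrow> f \<in> tensor_rel N M \<Longrightarrow> (\<lambda>q. f q + g q) \<in> tensor_rel N M"
proof (induction g rule: tensor_rel.induct)
  case zero then show ?case by simp
next
  case (add g h)
  have "(\<lambda>q. f q + (g q + h q)) = (\<lambda>q. (\<lambda>q. f q + g q) q + h q)" by (simp add: add.assoc)
  then show ?case using tensor_rel.add[OF add.IH[OF add.prems] add.hyps(2)] by simp
next
  case (sub g h)
  have "(\<lambda>q. f q + (g q - h q)) = (\<lambda>q. (\<lambda>q. f q + g q) q - h q)" by (simp add: algebra_simps)
  then show ?case using tensor_rel.sub[OF sub.IH[OF sub.prems] sub.hyps(2)] by simp
qed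

lemma tensor_rel_uminus: "f \<in> tensor_rel N M \<Longrightarrow> (\<lambda>q. - f q) \<in> tensor_rel N M"
proof (induction f rule: tensor_rel.induct)
  case zero then show ?case using tensor_rel.zero by simp
next
  case (add g h)
  have "(\<lambda>q. - (g q + h q)) = (\<lambda>q. (\<lambda>q. - g q) q - h q)" by simp
  then show ?case using tensor_rel.sub[OF add.IH add.hyps(2)] by simp
next
  case (sub g h)
  have "(\<lambda>q. - (g q - h q)) = (\<lambda>q. (\<lambda>q. - g q) q + h q)" by simp
  then show ?case using tensor_rel.add[OF sub.IH sub.hyps(2)] by simp
qed

definition tensor_eq ::
  "('a, 'n) lmod \<Rightarrow> ('a, 'm) lmod \<Rightarrow> ('n \<times> 'm \<Rightarrow> int) \<Rightarrow> ('n \<times> 'm \<Rightarrow> int) \<Rightarrow> bool" where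
  "tensor_eq N M f g \<longleftrightarrow> (\<lambda>q. f q - g q) \<in> tensor_rel N M"

lemma tensor_eq_refl: "tensor_eq N M f f"
  unfolding tensor_eq_def using tensor_rel.zero by simp

lemma tensor_eq_sym: "tensor_eq N M f g \<Longrightarrow> tensor_eq N M g f"
  unfolding tensor_eq_def using tensor_rel_uminus by fastforce

lemma tensor_eq_trans [trans]: "tensor_eq N M f g \<Longrightarrow> tensor_eq N M g h \<Longrightarrow> tensor_eq N M f h"
  unfolding tensor_eq_def using tensor_rel_add[of "\<lambda>q. g q - h q" N M "\<lambda>q. f q - g q"] by simp

lemma tensor_eq_add:
  "tensor_eq N M f g \<Longrightarrow> tensor_eq N M f' g' \<Longrightarrow>
    tensor_eq N M (\<lambda>q. f q + f' q) (\<lambda>q. g q + g' q)"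
  unfolding tensor_eq_def using tensor_rel_add[of "\<lambda>q. f' q - g' q" N M "\<lambda>q. f q - g q"]
  by (simp add: algebra_simps)

lemma tensor_eq_sum:
  fixes p :: nat
  shows "(\<And>i. i < p \<Longrightarrow> tensor_eq N M (f i) (g i)) \<Longrightarrow>
    tensor_eq N M (\<lambda>q. \<Sum>i<p. f i q) (\<lambda>q. \<Sum>i<p. g i q)"
proof (induction p)
  case 0 then show ?case using tensor_eq_refl by simp
next
  case (Suc p)
  then show ?case using tensor_eq_add[of N M "\<lambda>q. \<Sum>i<p. f i q" "\<lambda>q. \<Sum>i<p. g i q" "f p" "g p"]
    by simp
qed

lemma tensor_rel_if_tensor_eq_zero: "tensor_eq N M f (\<lambda>q. 0) \<Longrightarrow> f \<in> tensor_rel N M"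
  unfolding tensor_eq_def by simp

lemma tensor_eq_add_left:
  assumes "n \<in> mcarrier N" "n' \<in> mcarrier N" "m \<in> mcarrier M"
  shows "tensor_eq N M (delta (madd N n n', m)) (\<lambda>q. delta (n, m) q + delta (n', m) q)"
proof -
  have "(\<lambda>q. delta (madd N n n', m) q - delta (n, m) q - delta (n', m) q) \<in> tensor_gens N M"
    unfolding tensor_gens_def using assms by blast
  then show ?thesis unfolding tensor_eq_def using tensor_rel_gen by (simp add: diff_diff_eq)
qed

lemma tensor_eq_add_right:
  assumes "n \<in> mcarrier N" "m \<in> mcarrier M" "m' \<in> mcarrier M"
  shows "tensor_eq N M (delta (n, madd M m m')) (\<lambda>q. delta (n, m) q + delta (n, m') q)"
proof -
  have "(\<lambda>q. delta (n, madd M m m') q - delta (n, m) q - delta (n, m') q) \<in> tensor_gens N M"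
    unfolding tensor_gens_def using assms by blast
  then show ?thesis unfolding tensor_eq_def using tensor_rel_gen by (simp add: diff_diff_eq)
qed

lemma tensor_eq_balanced:
  assumes "n \<in> mcarrier N" "m \<in> mcarrier M"
  shows "tensor_eq N M (delta (msmult N r n, m)) (delta (n, msmult M r m))"
proof -
  have "(\<lambda>q. delta (msmult N r n, m) q - delta (n, msmult M r m) q) \<in> tensor_gens N M"
    unfolding tensor_gens_def using assms by blast
  then show ?thesis unfolding tensor_eq_def by (rule tensor_rel_gen)
qed

lemma tensor_eq_zero_if_double:
  assumes "tensor_eq N M f (\<lambda>q. f q + f q)" shows "tensor_eq N M f (\<lambda>q. 0)"
proof -
  have "(\<lambda>q. - (f q - (f q + f q))) \<in> tensor_rel N M" using assms tensor_rel_uminus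
    unfolding tensor_eq_def by blast
  then show ?thesis unfolding tensor_eq_def by simp
qed

context lmodule
begin

lemma tensor_eq_zero_right: "n \<in> mcarrier N \<Longrightarrow> tensor_eq N M (delta (n, mzero M)) (\<lambda>q. 0)"
proof -
  assume n: "n \<in> mcarrier N"
  have "tensor_eq N M (delta (n, mzero M)) (\<lambda>q. delta (n, mzero M) q + delta (n, mzero M) q)"
    using tensor_eq_add_right[OF n, of "mzero M" M "mzero M"] by simp
  then show ?thesis by (rule tensor_eq_zero_if_double)
qed

lemma tensor_eq_msum_right:
  fixes p :: nat
  assumes "n \<in> mcarrier N" "\<And>i. i < p \<Longrightarrow> g i \<in> mcarrier M"
  shows "tensor_eq N M (delta (n, msum M g p)) (\<lambda>q. \<Sum>i<p. delta (n, g i) q)"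
  using assms(2)
proof (induction p)
  case 0 then show ?case using tensor_eq_zero_right[OF assms(1)] by simp
next
  case (Suc p)
  have "tensor_eq N M (delta (n, msum M g (Suc p))) (\<lambda>q. delta (n, msum M g p) q + delta (n, g p)
      q)"
    using tensor_eq_add_right[OF assms(1), of "msum M g p" M "g p"] Suc.prems by simp
  moreover have "tensor_eq N M (\<lambda>q. delta (n, msum M g p) q + delta (n, g p) q)
      (\<lambda>q. (\<Sum>i<p. delta (n, g i) q) + delta (n, g p) q)"
    using tensor_eq_add[OF Suc.IH tensor_eq_refl] Suc.prems by simp
  ultimately show ?case using tensor_eq_trans by simp
qed

end

lemma tensor_eq_msum_left:
  fixes p :: nat
  assumes z: "mzero N \<in> mcarrier N" and zz: "madd N (mzero N) (mzero N) = mzero N"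
    and cl: "\<And>x y. x \<in> mcarrier N \<Longrightarrow> y \<in> mcarrier N \<Longrightarrow> madd N x y \<in> mcarrier N"
    and m: "m \<in> mcarrier M"
    and f: "\<And>i. i < p \<Longrightarrow> f i \<in> mcarrier N"
  shows "tensor_eq N M (delta (msum N f p, m)) (\<lambda>q. \<Sum>i<p. delta (f i, m) q)"
  using f
proof (induction p)
  case 0
  have "tensor_eq N M (delta (mzero N, m)) (\<lambda>q. delta (mzero N, m) q + delta (mzero N, m) q)"
    using tensor_eq_add_left[OF z z m] zz by simp
  then have "tensor_eq N M (delta (mzero N, m)) (\<lambda>q. 0)" by (rule tensor_eq_zero_if_double)
  then show ?case by simp
next
  case (Suc p)
  have inN: "msum N f p \<in> mcarrier N" using Suc.prems
  proof (induction p)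
    case 0 then show ?case using z by simp
  next
    case (Suc p) then show ?case using cl by simp
  qed
  have "tensor_eq N M (delta (msum N f (Suc p), m)) (\<lambda>q. delta (msum N f p, m) q + delta (f p, m)
      q)"
    using tensor_eq_add_left[OF inN _ m, of "f p"] Suc.prems by simp
  moreover have "tensor_eq N M (\<lambda>q. delta (msum N f p, m) q + delta (f p, m) q)
      (\<lambda>q. (\<Sum>i<p. delta (f i, m) q) + delta (f p, m) q)"
    using tensor_eq_add[OF Suc.IH tensor_eq_refl] Suc.prems by simp
  ultimately show ?case using tensor_eq_trans by simp
qed

definition formal_eval :: "('p \<Rightarrow> 'a::ring_1) \<Rightarrow> ('p \<Rightarrow> int) \<Rightarrow> 'a" where
  "formal_eval w f = (\<Sum>q\<in>{q. f q \<noteq> 0}. of_int (f q) * w q)"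

lemma formal_eval_superset:
  assumes "finite S" "{q. f q \<noteq> 0} \<subseteq> S"
  shows "formal_eval w f = (\<Sum>q\<in>S. of_int (f q) * w q)"
  unfolding formal_eval_def by (rule sum.mono_neutral_cong_left) (use assms in auto)

lemma formal_eval_add:
  assumes "finite {q. f q \<noteq> 0}" "finite {q. g q \<noteq> 0}"
  shows "formal_eval w (\<lambda>q. f q + g q) = formal_eval w f + formal_eval w g"
proof -
  let ?S = "{q. f q \<noteq> 0} \<union> {q. g q \<noteq> 0}"
  have "formal_eval w (\<lambda>q. f q + g q) = (\<Sum>q\<in>?S. of_int (f q + g q) * w q)"
    by (rule formal_eval_superset) (use assms in auto)
  also have "\<dots> = (\<Sum>q\<in>?S. of_int (f q) * w q) + (\<Sum>q\<in>?S. of_int (g q) * w q)"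
    by (simp add: distrib_right sum.distrib)
  also have "\<dots> = formal_eval w f + formal_eval w g"
    using formal_eval_superset[of ?S f w] formal_eval_superset[of ?S g w] assms by auto
  finally show ?thesis .
qed

lemma formal_eval_diff:
  assumes "finite {q. f q \<noteq> 0}" "finite {q. g q \<noteq> 0}"
  shows "formal_eval w (\<lambda>q. f q - g q) = formal_eval w f - formal_eval w g"
proof -
  let ?S = "{q. f q \<noteq> 0} \<union> {q. g q \<noteq> 0}"
  have "formal_eval w (\<lambda>q. f q - g q) = (\<Sum>q\<in>?S. of_int (f q - g q) * w q)"
    by (rule formal_eval_superset) (use assms in auto)
  also have "\<dots> = (\<Sum>q\<in>?S. of_int (f q) * w q) - (\<Sum>q\<in>?S. of_int (g q) * w q)"
    by (simp add: left_diff_distrib sum_subtractf)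
  also have "\<dots> = formal_eval w f - formal_eval w g"
    using formal_eval_superset[of ?S f w] formal_eval_superset[of ?S g w] assms by auto
  finally show ?thesis .
qed

lemma delta_support: "{q. delta a q \<noteq> 0} = {a}"
  unfolding delta_def by auto

lemma formal_eval_delta: "formal_eval w (delta a) = w a"
  unfolding formal_eval_def delta_support by (simp add: delta_def)

lemma formal_eval_zero: "formal_eval w (\<lambda>q. 0) = 0"
  unfolding formal_eval_def by simp

lemma finite_support_diff: "finite {q. f q \<noteq> 0} \<Longrightarrow> finite {q. g q \<noteq> (0::int)} \<Longrightarrow>
   finite {q. f q - g q \<noteq> 0}"
  by (rule finite_subset[of _ "{q. f q \<noteq> 0} \<union> {q. g q \<noteq> 0}"]) auto

lemma finite_support_add: "finite {q. f q \<noteq> 0} \<Longrightarrow> finite {q. g q \<noteq> (0::int)} \<Longrightarrow>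
   finite {q. f q + g q \<noteq> 0}"
  by (rule finite_subset[of _ "{q. f q \<noteq> 0} \<union> {q. g q \<noteq> 0}"]) auto

lemma finite_support_delta: "finite {q. delta a q \<noteq> 0}"
  unfolding delta_support by simp

lemma formal_eval_delta_diff_diff: "formal_eval w (\<lambda>q. delta a q - delta b q - delta c q)
    = w a - w b - w c"
proof -
  have f: "finite {q. delta a q - delta b q \<noteq> 0}"
    by (rule finite_support_diff[OF finite_support_delta finite_support_delta])
  have "formal_eval w (\<lambda>q. delta a q - delta b q - delta c q)
      = formal_eval w (\<lambda>q. delta a q - delta b q) - formal_eval w (delta c)"
    by (rule formal_eval_diff[OF f finite_support_delta])
  also have "formal_eval w (\<lambda>q. delta a q - delta b q)
      = formal_eval w (delta a) - formal_eval w (delta b)"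
    by (rule formal_eval_diff[OF finite_support_delta finite_support_delta])
  finally show ?thesis by (simp add: formal_eval_delta)
qed

lemma formal_eval_delta_diff: "formal_eval w (\<lambda>q. delta a q - delta b q) = w a - w b"
proof -
  have "formal_eval w (\<lambda>q. delta a q - delta b q)
      = formal_eval w (delta a) - formal_eval w (delta b)"
    by (rule formal_eval_diff[OF finite_support_delta finite_support_delta])
  then show ?thesis by (simp add: formal_eval_delta)
qed

lemma tensor_gens_finite_support: "g \<in> tensor_gens N M \<Longrightarrow> finite {q. g q \<noteq> 0}"
  unfolding tensor_gens_def
  by (auto intro!: finite_support_diff finite_support_delta)

lemma tensor_rel_finite_support: "f \<in> tensor_rel N M \<Longrightarrow> finite {q. f q \<noteq> 0}"
proof (induction rule: tensor_rel.induct)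
  case zero then show ?case by simp
next
  case (add f g) then show ?case
    using finite_support_add[OF add.IH tensor_gens_finite_support[OF add.hyps(2)]] by simp
next
  case (sub f g) show ?case
    by (rule finite_support_diff[OF sub.IH tensor_gens_finite_support[OF sub.hyps(2)]])
qed

lemma formal_eval_sum_delta:
  fixes N :: nat
  shows "formal_eval w (\<lambda>q. \<Sum>k<N. delta (a k) q) = (\<Sum>k<N. w (a k))"
proof (induction N)
  case 0 then show ?case by (simp add: formal_eval_zero)
next
  case (Suc N)
  have fin: "finite {q. (\<Sum>k<N. delta (a k) q) \<noteq> 0}"
  proof (rule finite_subset[of _ "a ` {..<N}"])
    show "{q. (\<Sum>k<N. delta (a k) q) \<noteq> 0} \<subseteq> a ` {..<N}"
    proof
      fix q assume "q \<in> {q. (\<Sum>k<N. delta (a k) q) \<noteq> 0}"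
      then obtain k where "k < N" "delta (a k) q \<noteq> 0"
        by (metis (mono_tags, lifting) lessThan_iff mem_Collect_eq sum.neutral)
      then show "q \<in> a ` {..<N}" unfolding delta_def by (auto split: if_splits)
    qed
  qed simp
  have "formal_eval w (\<lambda>q. \<Sum>k<Suc N. delta (a k) q)
      = formal_eval w (\<lambda>q. (\<Sum>k<N. delta (a k) q) + delta (a N) q)"
    by simp
  also have "\<dots> = formal_eval w (\<lambda>q. \<Sum>k<N. delta (a k) q) + formal_eval w (delta (a N))"
    by (rule formal_eval_add[OF fin finite_support_delta])
  finally show ?case using Suc formal_eval_delta by simp
qed

section \<open>Flatness and a matrix of relations\<close>

locale kernel_rows = generating_family M xs n for M :: "('a::ring_1, 'm) lmod" and xs n +
  fixes ks :: "nat \<Rightarrow> nat \<Rightarrow> 'a" and p :: nat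
  assumes rows_in_kernel: "\<And>i. i < p \<Longrightarrow> lin (ks i) = mzero M"
begin

text \<open>Rp is R^p as a right module (vectors vanishing from index p on); kRn is its
  submodule k R^n, the image of the p \<times> n matrix k with rows ks i.\<close>

definition Rp :: "('a, nat \<Rightarrow> 'a) lmod" where
  "Rp = \<lparr> mcarrier = {v. \<forall>i. p \<le> i \<longrightarrow> v i = 0}, madd = (\<lambda>v w i. v i + w i),
          mzero = (\<lambda>i. 0), msmult = (\<lambda>r v i. v i * r) \<rparr>"

definition kmul :: "(nat \<Rightarrow> 'a) \<Rightarrow> nat \<Rightarrow> 'a" where
  "kmul v = (\<lambda>i. if i < p then (\<Sum>j<n. ks i j * v j) else 0)"

definition kRn :: "('a, nat \<Rightarrow> 'a) lmod" where
  "kRn = Rp\<lparr>mcarrier := range kmul\<rparr>"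

definition column :: "nat \<Rightarrow> nat \<Rightarrow> 'a" where
  "column j = kmul (unit_vec j)"

definition column_tensor :: "(nat \<Rightarrow> 'a) \<times> 'm \<Rightarrow> int" where
  "column_tensor = (\<lambda>q. \<Sum>j<n. delta (column j, xs j) q)"

lemma Rp_simps[simp]: "mcarrier Rp = {v. \<forall>i. p \<le> i \<longrightarrow> v i = 0}" "madd Rp = (\<lambda>v w i. v i + w i)"
  "mzero Rp = (\<lambda>i. 0)" "msmult Rp = (\<lambda>r v i. v i * r)"
  unfolding Rp_def by simp_all

lemma kRn_simps[simp]: "mcarrier kRn = range kmul" "madd kRn = (\<lambda>v w i. v i + w i)"
  "mzero kRn = (\<lambda>i. 0)" "msmult kRn = (\<lambda>r v i. v i * r)"
  unfolding kRn_def by simp_all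

lemma kmul_add: "kmul (\<lambda>j. v j + w j) = (\<lambda>i. kmul v i + kmul w i)"
  unfolding kmul_def by (auto simp: distrib_left sum.distrib)

lemma kmul_diff: "kmul (\<lambda>j. v j - w j) = (\<lambda>i. kmul v i - kmul w i)"
  unfolding kmul_def by (auto simp: right_diff_distrib sum_subtractf)

lemma kmul_neg: "kmul (\<lambda>j. - v j) = (\<lambda>i. - kmul v i)"
  unfolding kmul_def by (auto simp: sum_negf)

lemma kmul_smult: "kmul (\<lambda>j. v j * r) = (\<lambda>i. kmul v i * r)"
  unfolding kmul_def by (auto simp: sum_distrib_right mult.assoc)

lemma kmul_zero: "kmul (\<lambda>j. 0) = (\<lambda>i. 0)"
  unfolding kmul_def by auto

lemma right_module_Rp: "right_module Rp"
  unfolding right_module_def abelian_carrier_def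
proof (intro conjI ballI allI)
  fix x assume "x \<in> mcarrier Rp"
  then show "\<exists>y\<in>mcarrier Rp. madd Rp x y = mzero Rp"
    by (intro bexI[of _ "\<lambda>i. - x i"]) auto
qed (auto simp: algebra_simps)

lemma kmul_in_Rp: "kmul v \<in> mcarrier Rp"
  unfolding kmul_def by simp

lemma right_module_kRn: "right_module kRn"
  unfolding right_module_def abelian_carrier_def
proof (intro conjI ballI allI)
  have "kmul (\<lambda>j. 0) \<in> range kmul" by (rule rangeI)
  then show "mzero kRn \<in> mcarrier kRn" using kmul_zero by simp
next
  fix x y assume "x \<in> mcarrier kRn" "y \<in> mcarrier kRn"
  then obtain v w where "x = kmul v" "y = kmul w" by auto
  moreover have "kmul (\<lambda>j. v j + w j) \<in> range kmul" by (rule rangeI)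
  ultimately show "madd kRn x y \<in> mcarrier kRn" using kmul_add[of v w] by simp
next
  fix x r assume "x \<in> mcarrier kRn"
  then obtain v where "x = kmul v" by auto
  moreover have "kmul (\<lambda>j. v j * r) \<in> range kmul" by (rule rangeI)
  ultimately show "msmult kRn r x \<in> mcarrier kRn" using kmul_smult[of v r] by simp
next
  fix x assume "x \<in> mcarrier kRn"
  then obtain v where v: "x = kmul v" by auto
  show "\<exists>y\<in>mcarrier kRn. madd kRn x y = mzero kRn"
  proof (intro bexI)
    show "kmul (\<lambda>j. - v j) \<in> mcarrier kRn" by simp
    show "madd kRn x (kmul (\<lambda>j. - v j)) = mzero kRn" unfolding v kmul_neg by simp
  qed
qed (auto simp: algebra_simps)

lemma range_kmul_subset: "range kmul \<subseteq> mcarrier Rp"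
  using kmul_in_Rp by auto

lemma msum_Rp: "msum Rp f k = (\<lambda>t. \<Sum>i<k. f i t)"
  by (induction k) auto

lemma unit_vec_Rp: "i < p \<Longrightarrow> unit_vec i \<in> mcarrier Rp"
  unfolding unit_vec_def by auto

lemma column_eq_msum: "j < n \<Longrightarrow> column j = msum Rp (\<lambda>i. msmult Rp (ks i j) (unit_vec i)) p"
proof -
  assume j: "j < n"
  have "column j t = (\<Sum>i<p. unit_vec i t * ks i j)" for t
  proof -
    have "(\<Sum>i<p. unit_vec i t * ks i j) = (\<Sum>i<p. if t = i then ks i j else 0)"
      unfolding unit_vec_def by (rule sum.cong) auto
    also have "\<dots> = (if t < p then ks t j else 0)" by (simp add: sum.delta)
    also have "\<dots> = column j t"
    proof -
      have "(\<Sum>j'<n. ks t j' * unit_vec j j') = (\<Sum>j'<n. if j' = j then ks t j' else 0)"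
        unfolding unit_vec_def by (rule sum.cong) auto
      also have "\<dots> = ks t j" using j by (simp add: sum.delta')
      finally show ?thesis unfolding column_def kmul_def by simp
    qed
    finally show ?thesis by simp
  qed
  then show ?thesis unfolding msum_Rp by auto
qed

text \<open>In R^p \<otimes> M the element vanishes: moving the scalars across the tensor sign gives
  \<Sum>i. e_i \<otimes> (\<Sum>j. k_ij x_j), and every row of k lies in the kernel of lin.\<close>

lemma column_tensor_rel_Rp: "column_tensor \<in> tensor_rel Rp M"
proof -
  have "tensor_eq Rp M column_tensor
      (\<lambda>q. \<Sum>j<n. \<Sum>i<p. delta (msmult Rp (ks i j) (unit_vec i), xs j) q)"
    unfolding column_tensor_def
  proof (rule tensor_eq_sum)
    fix j assume j: "j < n"
    show "tensor_eq Rp M (delta (column j, xs j))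
        (\<lambda>q. \<Sum>i<p. delta (msmult Rp (ks i j) (unit_vec i), xs j) q)"
      unfolding column_eq_msum[OF j]
      by (rule tensor_eq_msum_left) (auto simp: gen_closed[OF j] unit_vec_def)
  qed
  also have "tensor_eq Rp M \<dots> (\<lambda>q. \<Sum>j<n. \<Sum>i<p. delta (unit_vec i, msmult M (ks i j) (xs j)) q)"
    by (intro tensor_eq_sum tensor_eq_balanced) (auto simp: unit_vec_def gen_closed)
  also have "\<dots> = (\<lambda>q. \<Sum>i<p. \<Sum>j<n. delta (unit_vec i, msmult M (ks i j) (xs j)) q)"
    by (rule ext) (rule sum.swap)
  also have "tensor_eq Rp M \<dots> (\<lambda>q. \<Sum>i<p. delta (unit_vec i, lin (ks i)) q)"
  proof (rule tensor_eq_sum)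
    fix i assume i: "i < p"
    show "tensor_eq Rp M (\<lambda>q. \<Sum>j<n. delta (unit_vec i, msmult M (ks i j) (xs j)) q)
        (delta (unit_vec i, lin (ks i)))"
      unfolding lin_def
      by (rule tensor_eq_sym, rule tensor_eq_msum_right) (use unit_vec_Rp[OF i] gen_closed in auto)
  qed
  also have "\<dots> = (\<lambda>q. \<Sum>i<p. delta (unit_vec i, mzero M) q)"
    using rows_in_kernel by (auto intro!: ext sum.cong)
  also have "tensor_eq Rp M \<dots> (\<lambda>q. \<Sum>i<p. 0)"
    by (intro tensor_eq_sum tensor_eq_zero_right unit_vec_Rp)
  finally show ?thesis by (intro tensor_rel_if_tensor_eq_zero) simp
qed

definition kmul_preimage :: "(nat \<Rightarrow> 'a) \<Rightarrow> nat \<Rightarrow> 'a" where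
  "kmul_preimage c = (SOME v. kmul v = c)"

text \<open>Identifying R^n \<otimes> R^n with n \<times> n matrices, outer_sum sends c \<otimes> m to the outer
  product of a k-preimage of c and the coordinates of m. Relations of kRn \<otimes> M are sent into
  tensor_kernel, the matrices B + C with k B = 0 and rows of C in the kernel of lin.\<close>

definition outer_sum :: "((nat \<Rightarrow> 'a) \<times> 'm \<Rightarrow> int) \<Rightarrow> nat \<Rightarrow> nat \<Rightarrow> 'a" where
  "outer_sum f = (\<lambda>j j'. formal_eval (\<lambda>q. kmul_preimage (fst q) j * coords (snd q) j') f)"

definition tensor_kernel :: "(nat \<Rightarrow> nat \<Rightarrow> 'a) set" where
  "tensor_kernel = {A. \<exists>B. (\<forall>i<p. \<forall>j'. (\<Sum>j<n. ks i j * B j j') = 0) \<and>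
                        (\<forall>j<n. lin (\<lambda>j'. A j j' - B j j') = mzero M)}"

lemma kmul_preimage:
  assumes "c \<in> range kmul" shows "kmul (kmul_preimage c) = c"
proof -
  obtain v where "kmul v = c" using assms by auto
  then show ?thesis unfolding kmul_preimage_def by (rule someI[where P = "\<lambda>v. kmul v = c"])
qed

lemma range_kmul_add: "c \<in> range kmul \<Longrightarrow> c' \<in> range kmul \<Longrightarrow> (\<lambda>i. c i + c' i) \<in> range kmul"
  by (auto simp: kmul_add[symmetric])

lemma range_kmul_smult: "c \<in> range kmul \<Longrightarrow> (\<lambda>i. c i * r) \<in> range kmul"
  by (auto simp: kmul_smult[symmetric])

lemma tensor_kernelI:
  assumes "\<And>i j'. i < p \<Longrightarrow> (\<Sum>j<n. ks i j * B j j') = 0"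
    and "\<And>j. j < n \<Longrightarrow> lin (\<lambda>j'. A j j' - B j j') = mzero M"
  shows "A \<in> tensor_kernel"
  unfolding tensor_kernel_def using assms by blast

lemma tensor_kernelE:
  assumes "A \<in> tensor_kernel"
  obtains B where "\<And>i j'. i < p \<Longrightarrow> (\<Sum>j<n. ks i j * B j j') = 0"
    and "\<And>j. j < n \<Longrightarrow> lin (\<lambda>j'. A j j' - B j j') = mzero M"
  using assms unfolding tensor_kernel_def by blast

lemma tensor_kernel_zero: "(\<lambda>j j'. 0) \<in> tensor_kernel"
  by (rule tensor_kernelI[where B = "\<lambda>j j'. 0"]) (simp_all add: lin_zero)

lemma tensor_kernel_add:
  assumes "A1 \<in> tensor_kernel" "A2 \<in> tensor_kernel"
  shows "(\<lambda>j j'. A1 j j' + A2 j j') \<in> tensor_kernel"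
proof -
  obtain B1 where B1: "\<And>i j'. i < p \<Longrightarrow> (\<Sum>j<n. ks i j * B1 j j') = 0"
    "\<And>j. j < n \<Longrightarrow> lin (\<lambda>j'. A1 j j' - B1 j j') = mzero M"
    using assms(1) by (rule tensor_kernelE) (rule that)
  obtain B2 where B2: "\<And>i j'. i < p \<Longrightarrow> (\<Sum>j<n. ks i j * B2 j j') = 0"
    "\<And>j. j < n \<Longrightarrow> lin (\<lambda>j'. A2 j j' - B2 j j') = mzero M"
    using assms(2) by (rule tensor_kernelE) (rule that)
  show ?thesis
  proof (rule tensor_kernelI[where B = "\<lambda>j j'. B1 j j' + B2 j j'"])
    fix i j' assume "i < p"
    then show "(\<Sum>j<n. ks i j * (B1 j j' + B2 j j')) = 0"
      using B1(1) B2(1) by (simp add: distrib_left sum.distrib)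
  next
    fix j assume "j < n"
    have "lin (\<lambda>j'. (A1 j j' + A2 j j') - (B1 j j' + B2 j j'))
        = lin (\<lambda>j'. (A1 j j' - B1 j j') + (A2 j j' - B2 j j'))"
      by (simp add: algebra_simps)
    also have "\<dots> = mzero M" using lin_add B1(2) B2(2) \<open>j < n\<close> by simp
    finally show "lin (\<lambda>j'. (A1 j j' + A2 j j') - (B1 j j' + B2 j j')) = mzero M" .
  qed
qed

lemma tensor_kernel_diff:
  assumes "A1 \<in> tensor_kernel" "A2 \<in> tensor_kernel"
  shows "(\<lambda>j j'. A1 j j' - A2 j j') \<in> tensor_kernel"
proof -
  obtain B1 where B1: "\<And>i j'. i < p \<Longrightarrow> (\<Sum>j<n. ks i j * B1 j j') = 0"
    "\<And>j. j < n \<Longrightarrow> lin (\<lambda>j'. A1 j j' - B1 j j') = mzero M"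
    using assms(1) by (rule tensor_kernelE) (rule that)
  obtain B2 where B2: "\<And>i j'. i < p \<Longrightarrow> (\<Sum>j<n. ks i j * B2 j j') = 0"
    "\<And>j. j < n \<Longrightarrow> lin (\<lambda>j'. A2 j j' - B2 j j') = mzero M"
    using assms(2) by (rule tensor_kernelE) (rule that)
  show ?thesis
  proof (rule tensor_kernelI[where B = "\<lambda>j j'. B1 j j' - B2 j j'"])
    fix i j' assume "i < p"
    then show "(\<Sum>j<n. ks i j * (B1 j j' - B2 j j')) = 0"
      using B1(1) B2(1) by (simp add: right_diff_distrib sum_subtractf)
  next
    fix j assume "j < n"
    have "lin (\<lambda>j'. (A1 j j' - A2 j j') - (B1 j j' - B2 j j'))
        = lin (\<lambda>j'. (A1 j j' - B1 j j') - (A2 j j' - B2 j j'))"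
      by (simp add: algebra_simps)
    also have "\<dots> = mzero M" using lin_diff_eq_zero B1(2) B2(2) \<open>j < n\<close> by simp
    finally show "lin (\<lambda>j'. (A1 j j' - A2 j j') - (B1 j j' - B2 j j')) = mzero M" .
  qed
qed

lemma tensor_kernel_outer_left:
  assumes "kmul d = (\<lambda>i. 0)"
  shows "(\<lambda>j j'. d j * u j') \<in> tensor_kernel"
proof (rule tensor_kernelI[where B = "\<lambda>j j'. d j * u j'"])
  fix i j' assume "i < p"
  then have "(\<Sum>j<n. ks i j * d j) = 0"
    using fun_cong[OF assms, of i] by (simp add: kmul_def)
  then show "(\<Sum>j<n. ks i j * (d j * u j')) = 0"
    by (metis (no_types, lifting) mult.assoc mult_zero_left sum.cong sum_distrib_right)
qed (simp add: lin_zero)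

lemma tensor_kernel_outer_right:
  assumes "lin e = mzero M"
  shows "(\<lambda>j j'. v j * e j') \<in> tensor_kernel"
  by (rule tensor_kernelI[where B = "\<lambda>j j'. 0"]) (simp_all add: lin_smult assms)

lemma outer_sum_add:
  assumes "finite {q. f q \<noteq> 0}" "finite {q. g q \<noteq> 0}"
  shows "outer_sum (\<lambda>q. f q + g q) = (\<lambda>j j'. outer_sum f j j' + outer_sum g j j')"
  unfolding outer_sum_def by (intro ext) (rule formal_eval_add[OF assms])

lemma outer_sum_diff:
  assumes "finite {q. f q \<noteq> 0}" "finite {q. g q \<noteq> 0}"
  shows "outer_sum (\<lambda>q. f q - g q) = (\<lambda>j j'. outer_sum f j j' - outer_sum g j j')"
  unfolding outer_sum_def by (intro ext) (rule formal_eval_diff[OF assms])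

lemma outer_sum_gen_add_left:
  assumes c: "c \<in> range kmul" and c': "c' \<in> range kmul"
  shows "outer_sum (\<lambda>q. delta (madd kRn c c', m) q - delta (c, m) q - delta (c', m) q)
      \<in> tensor_kernel"
proof -
  define d where "d j = kmul_preimage (\<lambda>i. c i + c' i) j - kmul_preimage c j - kmul_preimage c' j"
    for j
  have "kmul d = (\<lambda>i. 0)"
    unfolding d_def[abs_def] kmul_diff kmul_preimage[OF range_kmul_add[OF c c']]
      kmul_preimage[OF c] kmul_preimage[OF c']
    by simp
  moreover have "outer_sum (\<lambda>q. delta (madd kRn c c', m) q - delta (c, m) q - delta (c', m) q)
      = (\<lambda>j j'. d j * coords m j')"
    unfolding outer_sum_def formal_eval_delta_diff_diff d_def by (simp add: algebra_simps)
  ultimately show ?thesis using tensor_kernel_outer_left by simp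
qed

lemma outer_sum_gen_add_right:
  assumes "m \<in> mcarrier M" "m' \<in> mcarrier M"
  shows "outer_sum (\<lambda>q. delta (c, madd M m m') q - delta (c, m) q - delta (c, m') q)
      \<in> tensor_kernel"
proof -
  define e where "e j' = coords (madd M m m') j' - (coords m j' + coords m' j')" for j'
  have "lin (coords (madd M m m')) = lin (\<lambda>j'. coords m j' + coords m' j')"
    using lin_coords assms lin_add by simp
  then have "lin e = mzero M" unfolding e_def[abs_def] by (rule lin_diff_eq_zero)
  moreover have "outer_sum (\<lambda>q. delta (c, madd M m m') q - delta (c, m) q - delta (c, m') q)
      = (\<lambda>j j'. kmul_preimage c j * e j')"
    unfolding outer_sum_def formal_eval_delta_diff_diff e_def by (simp add: algebra_simps)
  ultimately show ?thesis using tensor_kernel_outer_right by simp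
qed

lemma outer_sum_gen_balanced:
  assumes c: "c \<in> range kmul" and m: "m \<in> mcarrier M"
  shows "outer_sum (\<lambda>q. delta (msmult kRn r c, m) q - delta (c, msmult M r m) q) \<in> tensor_kernel"
proof -
  define d where "d j = kmul_preimage (\<lambda>i. c i * r) j - kmul_preimage c j * r" for j
  define e where "e j' = r * coords m j' - coords (msmult M r m) j'" for j'
  have "kmul d = (\<lambda>i. 0)"
    unfolding d_def[abs_def] kmul_diff kmul_smult kmul_preimage[OF range_kmul_smult[OF c]]
      kmul_preimage[OF c]
    by simp
  moreover have "lin (\<lambda>j'. r * coords m j') = lin (coords (msmult M r m))"
    using lin_smult lin_coords m by simp
  then have "lin e = mzero M" unfolding e_def[abs_def] by (rule lin_diff_eq_zero)
  moreover have "outer_sum (\<lambda>q. delta (msmult kRn r c, m) q - delta (c, msmult M r m) q)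
      = (\<lambda>j j'. d j * coords m j' + kmul_preimage c j * e j')"
    unfolding outer_sum_def formal_eval_delta_diff d_def e_def by (simp add: algebra_simps)
  ultimately show ?thesis
    using tensor_kernel_add[OF tensor_kernel_outer_left tensor_kernel_outer_right] by simp
qed

lemma outer_sum_tensor_gens: "g \<in> tensor_gens kRn M \<Longrightarrow> outer_sum g \<in> tensor_kernel"
  unfolding tensor_gens_def
proof (elim UnE CollectE exE conjE)
  fix n' n'' m assume "g = (\<lambda>q. delta (madd kRn n' n'', m) q - delta (n', m) q - delta (n'', m) q)"
    "n' \<in> mcarrier kRn" "n'' \<in> mcarrier kRn" "m \<in> mcarrier M"
  then show "outer_sum g \<in> tensor_kernel" using outer_sum_gen_add_left by simp
next
  fix n' m m' assume "g = (\<lambda>q. delta (n', madd M m m') q - delta (n', m) q - delta (n', m') q)"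
    "n' \<in> mcarrier kRn" "m \<in> mcarrier M" "m' \<in> mcarrier M"
  then show "outer_sum g \<in> tensor_kernel" using outer_sum_gen_add_right by simp
next
  fix n' r m assume "g = (\<lambda>q. delta (msmult kRn r n', m) q - delta (n', msmult M r m) q)"
    "n' \<in> mcarrier kRn" "m \<in> mcarrier M"
  then show "outer_sum g \<in> tensor_kernel" using outer_sum_gen_balanced by simp
qed

lemma outer_sum_tensor_rel: "f \<in> tensor_rel kRn M \<Longrightarrow> outer_sum f \<in> tensor_kernel"
proof (induction rule: tensor_rel.induct)
  case zero
  have "outer_sum (\<lambda>q. 0) = (\<lambda>j j'. 0)" unfolding outer_sum_def formal_eval_zero by simp
  then show ?case using tensor_kernel_zero by simp
next
  case (add f g)
  have "outer_sum (\<lambda>q. f q + g q) = (\<lambda>j j'. outer_sum f j j' + outer_sum g j j')"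
    by (rule outer_sum_add[OF tensor_rel_finite_support[OF add.hyps(1)]
        tensor_gens_finite_support[OF add.hyps(2)]])
  then show ?case using tensor_kernel_add[OF add.IH outer_sum_tensor_gens[OF add.hyps(2)]] by simp
next
  case (sub f g)
  have "outer_sum (\<lambda>q. f q - g q) = (\<lambda>j j'. outer_sum f j j' - outer_sum g j j')"
    by (rule outer_sum_diff[OF tensor_rel_finite_support[OF sub.hyps(1)]
        tensor_gens_finite_support[OF sub.hyps(2)]])
  then show ?case using tensor_kernel_diff[OF sub.IH outer_sum_tensor_gens[OF sub.hyps(2)]] by simp
qed

lemma column_tensor_support: "{q. column_tensor q \<noteq> 0} \<subseteq> (\<lambda>j. (column j, xs j)) ` {..<n}"
proof
  fix q assume "q \<in> {q. column_tensor q \<noteq> 0}"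
  then have "(\<Sum>j<n. delta (column j, xs j) q) \<noteq> 0" unfolding column_tensor_def by simp
  then obtain j where "j < n" "delta (column j, xs j) q \<noteq> 0"
    by (metis (mono_tags, lifting) lessThan_iff sum.neutral)
  then show "q \<in> (\<lambda>j. (column j, xs j)) ` {..<n}" unfolding delta_def by (auto split: if_splits)
qed

lemma column_tensor_rel_kRn: assumes fl: "flat M" shows "column_tensor \<in> tensor_rel kRn M"
proof -
  have fin: "finite {q. column_tensor q \<noteq> 0}" by (rule finite_subset[OF column_tensor_support]) simp
  have sub: "{q. column_tensor q \<noteq> 0} \<subseteq> range kmul \<times> mcarrier M"
    using column_tensor_support gen_closed unfolding column_def by fastforce
  have rm: "right_module (Rp\<lparr>mcarrier := range kmul\<rparr>)" using right_module_kRn unfolding kRn_def .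
  have "\<forall>z. finite {q. z q \<noteq> 0} \<and> {q. z q \<noteq> 0} \<subseteq> range kmul \<times> mcarrier M \<and>
          z \<in> tensor_rel Rp M \<longrightarrow> z \<in> tensor_rel (Rp\<lparr>mcarrier := range kmul\<rparr>) M"
    using fl right_module_Rp range_kmul_subset rm unfolding flat_def by blast
  then show ?thesis using fin sub column_tensor_rel_Rp unfolding kRn_def by blast
qed

lemma outer_sum_column_tensor: "j' < n \<Longrightarrow> outer_sum column_tensor j j' = kmul_preimage (column j') j"
proof -
  assume j': "j' < n"
  have "outer_sum column_tensor j j' = (\<Sum>k<n. kmul_preimage (column k) j * coords (xs k) j')"
    unfolding outer_sum_def column_tensor_def
      using formal_eval_sum_delta[where w="\<lambda>q. kmul_preimage (fst q) j * coords (snd q) j'" and N=n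
          and a="\<lambda>k. (column k, xs k)"]
    by simp
  also have "\<dots> = (\<Sum>k<n. if k = j' then kmul_preimage (column k) j else 0)"
    by (rule sum.cong) (auto simp: coords_gen unit_vec_def)
  also have "\<dots> = kmul_preimage (column j') j" using j' by (simp add: sum.delta')
  finally show ?thesis .
qed

lemma row_mult_kmul_preimage_column:
  assumes "i < p" "j' < n"
  shows "(\<Sum>j<n. ks i j * kmul_preimage (column j') j) = ks i j'"
proof -
  have preimage: "kmul (kmul_preimage (column j')) = column j'"
    by (rule kmul_preimage) (simp add: column_def)
  have "(\<Sum>j<n. ks i j * kmul_preimage (column j') j) = kmul (kmul_preimage (column j')) i"
    using assms(1) by (simp add: kmul_def)
  also have "\<dots> = column j' i" by (simp only: preimage)
  also have "\<dots> = (\<Sum>j<n. if j = j' then ks i j else 0)"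
    using assms(1) unfolding column_def kmul_def unit_vec_def
      by (simp add: if_distrib cong: if_cong)
  also have "\<dots> = ks i j'"
    using assms(2) by simp
  finally show ?thesis .
qed

lemma flat_kernel_fixing_matrix:
  assumes "flat M"
  obtains T where "\<And>j. j < n \<Longrightarrow> lin (T j) = mzero M"
    and "\<And>i j'. i < p \<Longrightarrow> j' < n \<Longrightarrow> (\<Sum>j<n. ks i j * T j j') = ks i j'"
proof -
  have "outer_sum column_tensor \<in> tensor_kernel"
    by (rule outer_sum_tensor_rel[OF column_tensor_rel_kRn[OF assms]])
  then obtain B where B: "\<forall>i<p. \<forall>j'. (\<Sum>j<n. ks i j * B j j') = 0"
    "\<forall>j<n. lin (\<lambda>j'. outer_sum column_tensor j j' - B j j') = mzero M"
    unfolding tensor_kernel_def by blast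
  define T where "T j j' = outer_sum column_tensor j j' - B j j'" for j j'
  have "lin (T j) = mzero M" if "j < n" for j
    using B(2) that unfolding T_def[abs_def] by blast
  moreover have "(\<Sum>j<n. ks i j * T j j') = ks i j'" if "i < p" "j' < n" for i j'
    using that B(1) row_mult_kmul_preimage_column
    by (simp add: T_def outer_sum_column_tensor right_diff_distrib sum_subtractf)
  ultimately show thesis by (rule that)
qed

end

theorem corollary2p12:
  fixes M :: "('a::ring_1, 'm) lmod"
    and \<sigma> :: "'a \<Rightarrow> 'q::ring_1"
  assumes "left_module M"
    and "finitely_generated M"
    and "flat M"
    and "\<not> projective M"
    and "is_left_ring_of_fractions (S0 :: 'a set) \<sigma>"
  shows "\<not> semisimple_ring TYPE('q)"
proof
  assume ss: "semisimple_ring TYPE('q)"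
  have add: "\<forall>x y. \<sigma> (x + y) = \<sigma> x + \<sigma> y" and mult: "\<forall>x y. \<sigma> (x * y) = \<sigma> x * \<sigma> y"
    using assms(5) unfolding is_left_ring_of_fractions_def by blast+
  have "inj \<sigma>" using assms(5) by (rule left_ring_of_fractions_S0_inj)
  interpret lmodule M by (rule lmodule.intro) fact
  obtain xs n where "generating_family M xs n"
    using obtain_generating_family[OF assms(2)] .
  then interpret generating_family M xs n .
  obtain p :: nat and ks :: "nat \<Rightarrow> nat \<Rightarrow> 'a" where ks: "\<And>i. i < p \<Longrightarrow> ks i \<in> {a. lin a = mzero M}"
    and span: "\<And>a. a \<in> {a. lin a = mzero M} \<Longrightarrow>
      \<exists>c. \<forall>j<n. \<sigma> (a j) = (\<Sum>i<p. c i * \<sigma> (ks i j))"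
    by (rule semisimple_finite_left_span_enum[OF ss,
          where K = "{a. lin a = mzero M}" and n = n and \<phi> = "\<lambda>a j. \<sigma> (a j)"]) (rule that)
  interpret kernel_rows M xs n ks p
    by unfold_locales (use ks in blast)
  obtain T where T: "\<And>j. j < n \<Longrightarrow> lin (T j) = mzero M"
    and fixed: "\<And>i j'. i < p \<Longrightarrow> j' < n \<Longrightarrow> (\<Sum>j<n. ks i j * T j j') = ks i j'"
    using flat_kernel_fixing_matrix[OF assms(3)] by blast
  have "kernel_retraction M xs n T"
  proof unfold_locales
    fix a j' assume "lin a = mzero M" "j' < n"
    then obtain c where c: "\<forall>j<n. \<sigma> (a j) = (\<Sum>i<p. c i * \<sigma> (ks i j))"
      using span by blast
    show "(\<Sum>j<n. a j * T j j') = a j'"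
      by (rule fixed_if_left_combination_of_fixed[OF add[rule_format] mult[rule_format] \<open>inj \<sigma>\<close>])
        (use c fixed \<open>j' < n\<close> in auto)
  qed (rule T)
  then show False using kernel_retraction.projective assms(4) by blast
qed

end
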